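(* Let $n\ge 2$ and let $f:\mathbb{R}^n\to\mathbb{R}$, $f(x)=\sum_{r,q=1}^n a_{rq}x_rx_q^2$ with $a_{rq}=1$ if $r\ge q$ and $a_{rq}=0$ if $r<q$. Let $M=\mathrm{graph}(f)\subset\mathbb{R}^{n+1}$ with induced metric $g$, $p$ the origin, and let $g(t)$, $t\in[0,T)$, be a smooth solution of the Ricci flow $\partial_t g=-2\,\mathrm{Ric}(g)$ on a neighborhood of $p$ in $M$ with $g(0)=g$. Then at $(t,x)=(0,p)$: $g_{ij}=\delta_{ij}$, $Rm=0$, $\partial_t R_{ijkl}=0$ whenever $\{i,j\}\ne\{k,l\}$, and for $1\le i<j\le n$, $$\partial_t R_{ijij}(0,p)=-8\,(n-j+2)<0 .$$ In particular $\partial_t Rm(0,p)\neq 0$.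
   Context: $M$ is identified with $\mathbb{R}^n$ via $x\mapsto (x,f(x))$, giving global coordinates $x_1,\dots,x_n$ on $M$; components of tensors are taken with respect to the coordinate fields $\partial_i$. The curvature tensor convention is the one for which the Gauss equation of the graph reads $R_{ijkl}=h_{il}h_{jk}-h_{ik}h_{jl}$, where $h_{ij}=\partial_i\partial_j f/\sqrt{1+|\nabla f|^2}$ is the second fundamental form; equivalently, for $g$-orthonormal $e_i,e_j$ the sectional curvature of their span is $R_{ijji}$. *)

theory Defs
  imports "HOL-Analysis.Analysis"
begin

text \<open>Coordinates of R^n are indexed by a finite linearly ordered type 'n;
  the coordinate index i has numerical label pos i in {1..n}.\<close>

definition pos :: "'n::{finite,linorder} \<Rightarrow> nat" where
  "pos i = card {k. k \<le> i}"

definition fgraph :: "real^'n::{finite,linorder} \<Rightarrow> real" where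
  "fgraph x = (\<Sum>r\<in>UNIV. \<Sum>q\<in>UNIV.
      (if pos r \<ge> pos q then 1 else 0) * x$r * (x$q)^2)"

definition pd :: "'n::finite \<Rightarrow> (real^'n \<Rightarrow> 'b::real_normed_vector) \<Rightarrow> real^'n \<Rightarrow> 'b" where
  "pd k F x = vector_derivative (\<lambda>s. F (x + s *\<^sub>R axis k 1)) (at 0)"

definition graph_emb :: "(real^'n::finite \<Rightarrow> real) \<Rightarrow> real^'n \<Rightarrow> (real^'n) \<times> real" where
  "graph_emb f x = (x, f x)"

definition induced_metric :: "(real^'n::finite \<Rightarrow> real) \<Rightarrow> real^'n \<Rightarrow> real^'n^'n" where
  "induced_metric f x = (\<chi> i j. inner (pd i (graph_emb f) x) (pd j (graph_emb f) x))"

definition Gam :: "(real^'n::finite \<Rightarrow> real^'n^'n) \<Rightarrow> real^'n \<Rightarrow> 'n \<Rightarrow> 'n \<Rightarrow> 'n \<Rightarrow> real" where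
  "Gam G x m i j = (1/2) * (\<Sum>l\<in>UNIV. matrix_inv (G x) $ m $ l *
      (pd i (\<lambda>y. G y $ j $ l) x + pd j (\<lambda>y. G y $ i $ l) x - pd l (\<lambda>y. G y $ i $ j) x))"

text \<open>R(d_i,d_j)d_k = Rup i j k m d_m, with R(X,Y)Z = nabla_X nabla_Y Z - nabla_Y nabla_X Z - nabla_[X,Y] Z.\<close>
definition Rup :: "(real^'n::finite \<Rightarrow> real^'n^'n) \<Rightarrow> real^'n \<Rightarrow> 'n \<Rightarrow> 'n \<Rightarrow> 'n \<Rightarrow> 'n \<Rightarrow> real" where
  "Rup G x i j k m = pd i (\<lambda>y. Gam G y m j k) x - pd j (\<lambda>y. Gam G y m i k) x
     + (\<Sum>p\<in>UNIV. Gam G x p j k * Gam G x m i p - Gam G x p i k * Gam G x m j p)"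

text \<open>R_ijkl = g(R(d_i,d_j)d_k, d_l); sectional curvature of orthonormal e_i,e_j is R_ijji.\<close>
definition Rm :: "(real^'n::finite \<Rightarrow> real^'n^'n) \<Rightarrow> 'n \<Rightarrow> 'n \<Rightarrow> 'n \<Rightarrow> 'n \<Rightarrow> real^'n \<Rightarrow> real" where
  "Rm G i j k l x = (\<Sum>m\<in>UNIV. G x $ l $ m * Rup G x i j k m)"

definition Ric :: "(real^'n::finite \<Rightarrow> real^'n^'n) \<Rightarrow> real^'n \<Rightarrow> 'n \<Rightarrow> 'n \<Rightarrow> real" where
  "Ric G x j k = (\<Sum>i\<in>UNIV. Rup G x i j k i)"

primrec Ck :: "nat \<Rightarrow> 'a::euclidean_space set \<Rightarrow> ('a \<Rightarrow> real) \<Rightarrow> bool" where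
  "Ck 0 S F = continuous_on S F"
| "Ck (Suc k) S F = (\<exists>F'. (\<forall>x\<in>S. (F has_derivative F' x) (at x within S))
                          \<and> (\<forall>v. Ck k S (\<lambda>x. F' x v)))"

definition smooth_on :: "'a::euclidean_space set \<Rightarrow> ('a \<Rightarrow> real) \<Rightarrow> bool" where
  "smooth_on S F = (\<forall>k. Ck k S F)"

definition ricci_flow_solution ::
  "real \<Rightarrow> (real^'n::finite) set \<Rightarrow> (real \<Rightarrow> real^'n \<Rightarrow> real^'n^'n) \<Rightarrow> (real^'n \<Rightarrow> real^'n^'n) \<Rightarrow> bool" where
  "ricci_flow_solution T U g g0 \<longleftrightarrow>
     (\<forall>i j. smooth_on ({0..<T} \<times> U) (\<lambda>(t,x). g t x $ i $ j)) \<and>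
     (\<forall>t\<in>{0..<T}. \<forall>x\<in>U. (\<forall>i j. g t x $ i $ j = g t x $ j $ i) \<and>
                            (\<forall>v. v \<noteq> 0 \<longrightarrow> inner v (g t x *v v) > 0)) \<and>
     (\<forall>x\<in>U. g 0 x = g0 x) \<and>
     (\<forall>t\<in>{0..<T}. \<forall>x\<in>U. \<forall>i j.
        ((\<lambda>s. g s x $ i $ j) has_real_derivative (-2 * Ric (g t) x i j)) (at t within {0..<T}))"

end

theory Submission
  imports Defs
begin

text \<open>
  The induced metric is g0 = 1 + grad f grad f^T.  Since grad f vanishes to order 2
  at the origin, g0 - 1 vanishes to order 4, so g0(0) = 1 and the curvature of g0 vanishes at
  the origin; moreover, up to second order the Ricci tensor of g0 is given by its linearisation,
  a quadratic polynomial in the (constant) third derivatives d3f of f.  Along any path of metric jets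
  through the flat jet, the curvature at a point changes only through the second derivatives of
  the metric, linearly.  For the Ricci flow these second derivatives are those of -2 Ric(g0),
  after commuting time and space derivatives.  Combining, the rate of change of R_ijkl at the
  origin is an explicit quadratic expression in d3f, which is evaluated by counting.
\<close>

section \<open>Partial derivatives along coordinate axes\<close>

lemma pd_eqI:
  "((\<lambda>s. F (x + s *\<^sub>R axis k 1)) has_vector_derivative D) (at 0) \<Longrightarrow> pd k F x = D"
  unfolding pd_def by (rule vector_derivative_at)

lemma pd_eqI_real:
  fixes F :: "real^'n::finite \<Rightarrow> real"
  shows "((\<lambda>s. F (x + s *\<^sub>R axis k 1)) has_real_derivative D) (at 0) \<Longrightarrow> pd k F x = D"
  by (rule pd_eqI) (simp add: has_real_derivative_iff_has_vector_derivative)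

lemma has_derivative_along_axis:
  assumes "(F has_derivative F') (at x)"
  shows "((\<lambda>s. F (x + s *\<^sub>R axis k 1)) has_vector_derivative F' (axis k 1)) (at 0)"
proof -
  have line: "((\<lambda>s::real. x + s *\<^sub>R axis k 1) has_derivative (\<lambda>s. s *\<^sub>R axis k 1)) (at 0)"
    by (auto intro!: derivative_eq_intros)
  have "(F has_derivative F') (at (x + 0 *\<^sub>R axis k 1))" using assms by simp
  from has_derivative_compose[OF line this]
  have "((\<lambda>s. F (x + s *\<^sub>R axis k 1)) has_derivative (\<lambda>s. F' (s *\<^sub>R axis k 1))) (at 0)"
    by (simp add: o_def)
  moreover have "(\<lambda>s. F' (s *\<^sub>R axis k 1)) = (\<lambda>s. s *\<^sub>R F' (axis k 1))"
    using has_derivative_linear[OF assms] by (simp add: linear_scale)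
  ultimately show ?thesis by (simp add: has_vector_derivative_def)
qed

lemma pd_along_axis:
  fixes F :: "real^'n::finite \<Rightarrow> real"
  assumes "F differentiable (at x)"
  shows "((\<lambda>s. F (x + s *\<^sub>R axis k 1)) has_real_derivative pd k F x) (at 0)"
proof -
  obtain F' where F': "(F has_derivative F') (at x)"
    using assms by (auto simp: differentiable_def)
  show ?thesis
    using has_derivative_along_axis[OF F', of k] pd_eqI[OF has_derivative_along_axis[OF F']]
    by (simp add: has_real_derivative_iff_has_vector_derivative)
qed

lemma pd_local:
  assumes "open V" "x \<in> V" "\<And>y. y \<in> V \<Longrightarrow> F y = G y"
  shows "pd k F x = pd k G x"
proof -
  let ?W = "(\<lambda>s::real. x + s *\<^sub>R axis k 1) -` V"
  have W: "open ?W" "0 \<in> ?W"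
    using assms(2) by (auto intro!: open_vimage[OF assms(1)] continuous_intros)
  have eq: "F (x + s *\<^sub>R axis k 1) = G (x + s *\<^sub>R axis k 1)" if "s \<in> ?W" for s
    using assms(3) that by auto
  have "((\<lambda>s. F (x + s *\<^sub>R axis k 1)) has_vector_derivative D) (at 0) \<longleftrightarrow>
        ((\<lambda>s. G (x + s *\<^sub>R axis k 1)) has_vector_derivative D) (at 0)" for D
  proof
    assume "((\<lambda>s. F (x + s *\<^sub>R axis k 1)) has_vector_derivative D) (at 0)"
    then show "((\<lambda>s. G (x + s *\<^sub>R axis k 1)) has_vector_derivative D) (at 0)"
      by (rule has_vector_derivative_transform_within_open[OF _ W]) (use eq in auto)
  next
    assume "((\<lambda>s. G (x + s *\<^sub>R axis k 1)) has_vector_derivative D) (at 0)"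
    then show "((\<lambda>s. F (x + s *\<^sub>R axis k 1)) has_vector_derivative D) (at 0)"
      by (rule has_vector_derivative_transform_within_open[OF _ W]) (use eq in auto)
  qed
  then show ?thesis unfolding pd_def vector_derivative_def by simp
qed

lemma pd_add:
  fixes F G :: "real^'n::finite \<Rightarrow> real"
  assumes "F differentiable (at x)" "G differentiable (at x)"
  shows "pd k (\<lambda>y. F y + G y) x = pd k F x + pd k G x"
  by (rule pd_eqI_real) (auto intro!: derivative_eq_intros pd_along_axis assms)

lemma pd_diff:
  fixes F G :: "real^'n::finite \<Rightarrow> real"
  assumes "F differentiable (at x)" "G differentiable (at x)"
  shows "pd k (\<lambda>y. F y - G y) x = pd k F x - pd k G x"
  by (rule pd_eqI_real) (auto intro!: derivative_eq_intros pd_along_axis assms)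

lemma pd_mult:
  fixes F G :: "real^'n::finite \<Rightarrow> real"
  assumes "F differentiable (at x)" "G differentiable (at x)"
  shows "pd k (\<lambda>y. F y * G y) x = pd k F x * G x + F x * pd k G x"
  by (rule pd_eqI_real) (auto intro!: derivative_eq_intros pd_along_axis assms)

lemma pd_divide:
  fixes F G :: "real^'n::finite \<Rightarrow> real"
  assumes "F differentiable (at x)" "G differentiable (at x)" "G x \<noteq> 0"
  shows "pd k (\<lambda>y. F y / G y) x = (pd k F x * G x - F x * pd k G x) / (G x * G x)"
proof (rule pd_eqI_real)
  have "G (x + 0 *\<^sub>R axis k 1) \<noteq> 0" using assms(3) by simp
  from DERIV_divide[OF pd_along_axis[OF assms(1)] pd_along_axis[OF assms(2)] this]
  show "((\<lambda>s. F (x + s *\<^sub>R axis k 1) / G (x + s *\<^sub>R axis k 1)) has_real_derivative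
      (pd k F x * G x - F x * pd k G x) / (G x * G x)) (at 0)" by simp
qed

lemma pd_const: "pd k (\<lambda>y. c) x = (0::real)"
  by (rule pd_eqI_real) (auto intro!: derivative_eq_intros)

lemma pd_coord: "pd k (\<lambda>y::real^'n::finite. y $ i) x = (if i = k then 1 else 0)"
  by (rule pd_eqI_real) (auto intro!: derivative_eq_intros simp: axis_def)

lemma pd_sum:
  fixes F :: "'a \<Rightarrow> real^'n::finite \<Rightarrow> real"
  assumes "finite A" "\<And>a. a \<in> A \<Longrightarrow> F a differentiable (at x)"
  shows "pd k (\<lambda>y. \<Sum>a\<in>A. F a y) x = (\<Sum>a\<in>A. pd k (F a) x)"
  by (rule pd_eqI_real) (auto intro!: derivative_eq_intros pd_along_axis assms)

lemma pd_cmult: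
  fixes F :: "real^'n::finite \<Rightarrow> real"
  assumes "F differentiable (at x)"
  shows "pd k (\<lambda>y. c * F y) x = c * pd k F x"
  by (rule pd_eqI_real) (auto intro!: derivative_eq_intros pd_along_axis assms)

section \<open>Functions with partial derivatives of all orders\<close>

fun diff_upto :: "nat \<Rightarrow> (real^'n::finite \<Rightarrow> real) \<Rightarrow> bool" where
  "diff_upto 0 F = True"
| "diff_upto (Suc k) F = ((\<forall>x. F differentiable (at x)) \<and> (\<forall>d. diff_upto k (pd d F)))"

definition smooth_fn :: "(real^'n::finite \<Rightarrow> real) \<Rightarrow> bool" where
  "smooth_fn F = (\<forall>k. diff_upto k F)"

lemma diff_upto_Suc_imp: "diff_upto (Suc k) F \<Longrightarrow> diff_upto k F"
  by (induction k arbitrary: F) auto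

lemma diff_upto_const: "diff_upto k (\<lambda>y. c)"
proof (induction k arbitrary: c)
  case (Suc k)
  have "pd d (\<lambda>y::real^'a. c) = (\<lambda>y. 0)" for d by (rule ext) (simp add: pd_const)
  then show ?case using Suc by simp
qed simp

lemma diff_upto_coord: "diff_upto k (\<lambda>y. y $ i)"
proof (cases k)
  case (Suc k')
  have "pd d (\<lambda>y::real^'a. y $ i) = (\<lambda>y. if i = d then 1 else 0)" for d
    by (rule ext) (simp add: pd_coord)
  moreover have "(\<lambda>y::real^'a. y $ i) differentiable (at x)" for x
    by (rule bounded_linear_imp_differentiable) (rule bounded_linear_vec_nth)
  ultimately show ?thesis using Suc by (simp add: diff_upto_const)
qed simp

lemma diff_upto_add: "diff_upto k F \<Longrightarrow> diff_upto k G \<Longrightarrow> diff_upto k (\<lambda>y. F y + G y)"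
proof (induction k arbitrary: F G)
  case (Suc k)
  have "pd d (\<lambda>y. F y + G y) = (\<lambda>y. pd d F y + pd d G y)" for d
    using Suc.prems by (intro ext pd_add) auto
  then show ?case using Suc by auto
qed simp

lemma diff_upto_diff: "diff_upto k F \<Longrightarrow> diff_upto k G \<Longrightarrow> diff_upto k (\<lambda>y. F y - G y)"
proof (induction k arbitrary: F G)
  case (Suc k)
  have "pd d (\<lambda>y. F y - G y) = (\<lambda>y. pd d F y - pd d G y)" for d
    using Suc.prems by (intro ext pd_diff) auto
  then show ?case using Suc by auto
qed simp

lemma diff_upto_mult: "diff_upto k F \<Longrightarrow> diff_upto k G \<Longrightarrow> diff_upto k (\<lambda>y. F y * G y)"
proof (induction k arbitrary: F G)
  case (Suc k)
  have "pd d (\<lambda>y. F y * G y) = (\<lambda>y. pd d F y * G y + F y * pd d G y)" for d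
    using Suc.prems by (intro ext pd_mult) auto
  moreover have "diff_upto k (\<lambda>y. pd d F y * G y + F y * pd d G y)" for d
    using Suc diff_upto_Suc_imp[of k F] diff_upto_Suc_imp[of k G] by (intro diff_upto_add) auto
  ultimately show ?case using Suc.prems by auto
qed simp

lemma diff_upto_divide:
  "diff_upto k F \<Longrightarrow> diff_upto k G \<Longrightarrow> (\<And>y. G y \<noteq> 0) \<Longrightarrow> diff_upto k (\<lambda>y. F y / G y)"
proof (induction k arbitrary: F G)
  case (Suc k)
  have "pd d (\<lambda>y. F y / G y) = (\<lambda>y. (pd d F y * G y - F y * pd d G y) / (G y * G y))" for d
    using Suc.prems by (intro ext pd_divide) auto
  moreover have "diff_upto k (\<lambda>y. (pd d F y * G y - F y * pd d G y) / (G y * G y))" for d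
    using Suc.prems diff_upto_Suc_imp[of k F] diff_upto_Suc_imp[of k G]
    by (intro Suc.IH diff_upto_diff diff_upto_mult) auto
  ultimately show ?case using Suc.prems by (auto intro!: differentiable_divide)
qed simp

lemma diff_upto_sum:
  "finite A \<Longrightarrow> (\<And>a. a \<in> A \<Longrightarrow> diff_upto k (F a)) \<Longrightarrow> diff_upto k (\<lambda>y. \<Sum>a\<in>A. F a y)"
  by (induction A rule: finite_induct) (auto intro!: diff_upto_add simp: diff_upto_const)

lemma smooth_fn_const[intro]: "smooth_fn (\<lambda>y. c)"
  by (simp add: smooth_fn_def diff_upto_const)

lemma smooth_fn_coord[intro]: "smooth_fn (\<lambda>y. y $ i)"
  by (simp add: smooth_fn_def diff_upto_coord)

lemma smooth_fn_add[intro]: "smooth_fn F \<Longrightarrow> smooth_fn G \<Longrightarrow> smooth_fn (\<lambda>y. F y + G y)"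
  by (simp add: smooth_fn_def diff_upto_add)

lemma smooth_fn_diff[intro]: "smooth_fn F \<Longrightarrow> smooth_fn G \<Longrightarrow> smooth_fn (\<lambda>y. F y - G y)"
  by (simp add: smooth_fn_def diff_upto_diff)

lemma smooth_fn_mult[intro]: "smooth_fn F \<Longrightarrow> smooth_fn G \<Longrightarrow> smooth_fn (\<lambda>y. F y * G y)"
  by (simp add: smooth_fn_def diff_upto_mult)

lemma smooth_fn_divide[intro]:
  "smooth_fn F \<Longrightarrow> smooth_fn G \<Longrightarrow> (\<And>y. G y \<noteq> 0) \<Longrightarrow> smooth_fn (\<lambda>y. F y / G y)"
  by (simp add: smooth_fn_def diff_upto_divide)

lemma smooth_fn_sum[intro]:
  "finite A \<Longrightarrow> (\<And>a. a \<in> A \<Longrightarrow> smooth_fn (F a)) \<Longrightarrow> smooth_fn (\<lambda>y. \<Sum>a\<in>A. F a y)"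
  by (simp add: smooth_fn_def diff_upto_sum)

lemma smooth_fn_pd[intro]: "smooth_fn F \<Longrightarrow> smooth_fn (pd d F)"
  unfolding smooth_fn_def by (metis diff_upto.simps(2))

lemma smooth_fn_differentiable[intro]: "smooth_fn F \<Longrightarrow> F differentiable (at x)"
  unfolding smooth_fn_def by (metis diff_upto.simps(2))

lemma pd_add_fn: "smooth_fn F \<Longrightarrow> smooth_fn G \<Longrightarrow> pd d (\<lambda>y. F y + G y) = (\<lambda>y. pd d F y + pd d G y)"
  by (intro ext pd_add) auto

lemma pd_diff_fn: "smooth_fn F \<Longrightarrow> smooth_fn G \<Longrightarrow> pd d (\<lambda>y. F y - G y) = (\<lambda>y. pd d F y - pd d G y)"
  by (intro ext pd_diff) auto

lemma pd_mult_fn: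
  "smooth_fn F \<Longrightarrow> smooth_fn G \<Longrightarrow> pd d (\<lambda>y. F y * G y) = (\<lambda>y. pd d F y * G y + F y * pd d G y)"
  by (intro ext pd_mult) auto

lemma pd_cmult_fn: "smooth_fn F \<Longrightarrow> pd d (\<lambda>y. c * F y) = (\<lambda>y. c * pd d F y)"
  by (intro ext pd_cmult) auto

lemma pd_sum_fn:
  "finite A \<Longrightarrow> (\<And>a. a \<in> A \<Longrightarrow> smooth_fn (F a)) \<Longrightarrow>
   pd d (\<lambda>y. \<Sum>a\<in>A. F a y) = (\<lambda>y. \<Sum>a\<in>A. pd d (F a) y)"
  by (intro ext pd_sum) auto

lemma pd_const_fn: "pd d (\<lambda>y. c) = (\<lambda>y. 0::real)"
  by (intro ext pd_const)


section \<open>Iterated partial derivatives and order of vanishing at the origin\<close>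

fun iter_pd :: "'n list \<Rightarrow> (real^'n::finite \<Rightarrow> real) \<Rightarrow> real^'n \<Rightarrow> real" where
  "iter_pd [] F = F"
| "iter_pd (d # ds) F = iter_pd ds (pd d F)"

lemma iter_pd_add:
  "smooth_fn F \<Longrightarrow> smooth_fn G \<Longrightarrow> iter_pd ds (\<lambda>y. F y + G y) = (\<lambda>y. iter_pd ds F y + iter_pd ds G y)"
  by (induction ds arbitrary: F G) (auto simp: pd_add_fn)

lemma iter_pd_diff:
  "smooth_fn F \<Longrightarrow> smooth_fn G \<Longrightarrow> iter_pd ds (\<lambda>y. F y - G y) = (\<lambda>y. iter_pd ds F y - iter_pd ds G y)"
  by (induction ds arbitrary: F G) (auto simp: pd_diff_fn)

lemma iter_pd_cmult: "smooth_fn F \<Longrightarrow> iter_pd ds (\<lambda>y. c * F y) = (\<lambda>y. c * iter_pd ds F y)"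
  by (induction ds arbitrary: F) (auto simp: pd_cmult_fn)

lemma iter_pd_sum:
  "finite A \<Longrightarrow> (\<And>a. a \<in> A \<Longrightarrow> smooth_fn (F a)) \<Longrightarrow>
    iter_pd ds (\<lambda>y. \<Sum>a\<in>A. F a y) = (\<lambda>y. \<Sum>a\<in>A. iter_pd ds (F a) y)"
proof (induction ds arbitrary: F)
  case (Cons d ds)
  show ?case using Cons.prems by (simp add: pd_sum_fn Cons.IH smooth_fn_pd)
qed simp

definition vanishes_to :: "nat \<Rightarrow> (real^'n::finite \<Rightarrow> real) \<Rightarrow> bool" where
  "vanishes_to k F = (\<forall>ds. length ds < k \<longrightarrow> iter_pd ds F 0 = 0)"

lemma vanishes_toD: "vanishes_to k F \<Longrightarrow> length ds < k \<Longrightarrow> iter_pd ds F 0 = 0"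
  unfolding vanishes_to_def by blast

lemma vanishes_to_0[simp]: "vanishes_to 0 F"
  by (simp add: vanishes_to_def)

lemma vanishes_to_pd: "vanishes_to k F \<Longrightarrow> vanishes_to (k - 1) (pd d F)"
  unfolding vanishes_to_def
proof (intro allI impI)
  fix ds :: "'a list"
  assume "\<forall>ds. length ds < k \<longrightarrow> iter_pd ds F 0 = 0" "length ds < k - 1"
  then have "iter_pd (d # ds) F 0 = 0" by (metis length_Cons less_diff_conv Suc_eq_plus1)
  then show "iter_pd ds (pd d F) 0 = 0" by simp
qed

lemma vanishes_to_Suc:
  assumes "F 0 = 0" "\<And>d. vanishes_to k (pd d F)"
  shows "vanishes_to (Suc k) F"
  unfolding vanishes_to_def
proof (intro allI impI)
  fix ds :: "'a list"
  assume "length ds < Suc k"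
  then show "iter_pd ds F 0 = 0"
    using assms by (cases ds) (auto simp: vanishes_to_def)
qed

lemma vanishes_to_1: "F 0 = 0 \<Longrightarrow> vanishes_to 1 F"
  using vanishes_to_Suc[of F 0] by simp

lemma vanishes_to_add:
  "smooth_fn F \<Longrightarrow> smooth_fn G \<Longrightarrow> vanishes_to k F \<Longrightarrow> vanishes_to k G \<Longrightarrow> vanishes_to k (\<lambda>y. F y + G y)"
  by (simp add: vanishes_to_def iter_pd_add)

lemma vanishes_to_diff:
  "smooth_fn F \<Longrightarrow> smooth_fn G \<Longrightarrow> vanishes_to k F \<Longrightarrow> vanishes_to k G \<Longrightarrow> vanishes_to k (\<lambda>y. F y - G y)"
  by (simp add: vanishes_to_def iter_pd_diff)

lemma vanishes_to_cmult: "smooth_fn F \<Longrightarrow> vanishes_to k F \<Longrightarrow> vanishes_to k (\<lambda>y. c * F y)"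
  by (simp add: vanishes_to_def iter_pd_cmult)

lemma vanishes_to_sum:
  "finite A \<Longrightarrow> (\<And>a. a \<in> A \<Longrightarrow> smooth_fn (F a)) \<Longrightarrow> (\<And>a. a \<in> A \<Longrightarrow> vanishes_to k (F a)) \<Longrightarrow>
   vanishes_to k (\<lambda>y. \<Sum>a\<in>A. F a y)"
  by (simp add: vanishes_to_def iter_pd_sum)

text \<open>Leibniz: a product of functions vanishing to orders a and b vanishes to order a + b.
  Induction on the differentiation list, moving one derivative onto either factor.\<close>

lemma iter_pd_mult_vanishes:
  "smooth_fn F \<Longrightarrow> smooth_fn G \<Longrightarrow> vanishes_to a F \<Longrightarrow> vanishes_to b G \<Longrightarrow> length ds < a + b \<Longrightarrow>
    iter_pd ds (\<lambda>y. F y * G y) 0 = 0"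
proof (induction ds arbitrary: a b F G)
  case Nil
  then have "F 0 = 0 \<or> G 0 = 0"
    using vanishes_toD[of a F "[]"] vanishes_toD[of b G "[]"] by auto
  then show ?case by auto
next
  case (Cons d ds)
  have "iter_pd (d # ds) (\<lambda>y. F y * G y) 0 =
      iter_pd ds (\<lambda>y. pd d F y * G y) 0 + iter_pd ds (\<lambda>y. F y * pd d G y) 0"
    using Cons.prems by (simp add: pd_mult_fn iter_pd_add smooth_fn_mult smooth_fn_pd)
  moreover have "iter_pd ds (\<lambda>y. pd d F y * G y) 0 = 0"
    by (rule Cons.IH[of "pd d F" G "a - 1" b]) (use Cons.prems vanishes_to_pd in auto)
  moreover have "iter_pd ds (\<lambda>y. F y * pd d G y) 0 = 0"
    by (rule Cons.IH[of F "pd d G" a "b - 1"]) (use Cons.prems vanishes_to_pd in auto)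
  ultimately show ?case by simp
qed

lemma vanishes_to_mult:
  "smooth_fn F \<Longrightarrow> smooth_fn G \<Longrightarrow> vanishes_to a F \<Longrightarrow> vanishes_to b G \<Longrightarrow>
   vanishes_to (a + b) (\<lambda>y. F y * G y)"
  unfolding vanishes_to_def[of "a + b"] using iter_pd_mult_vanishes by blast

lemma vanishes_to_divide:
  assumes "smooth_fn F" "smooth_fn G" "\<And>y. G y \<noteq> 0" "vanishes_to k F"
  shows "vanishes_to k (\<lambda>y. F y / G y)"
proof -
  have "smooth_fn (\<lambda>y. 1 / G y)" using assms by (intro smooth_fn_divide) auto
  from vanishes_to_mult[OF assms(1) this assms(4) vanishes_to_0] show ?thesis by simp
qed

section \<open>The cubic f and its derivatives\<close>

text \<open>pos is strictly monotone, so the condition pos r >= pos q in the definition of fgraph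
  is just r >= q in the order of the index type.\<close>

lemma pos_le_iff: "pos (q::'n::{finite,linorder}) \<le> pos r \<longleftrightarrow> q \<le> r"
proof
  assume "q \<le> r"
  then show "pos q \<le> pos r" unfolding pos_def by (intro card_mono) auto
next
  assume h: "pos q \<le> pos r"
  show "q \<le> r"
  proof (rule ccontr)
    assume "\<not> q \<le> r"
    then have "{k. k \<le> r} \<subset> {k. k \<le> q}" by auto
    then have "pos r < pos q" unfolding pos_def by (intro psubset_card_mono) auto
    then show False using h by simp
  qed
qed

lemma pos_less_iff: "pos (q::'n::{finite,linorder}) < pos r \<longleftrightarrow> q < r"
  by (meson linorder_not_le pos_le_iff)

lemma pos_le_card: "pos (j::'n::{finite,linorder}) \<le> CARD('n)"
  unfolding pos_def by (rule card_mono) auto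

lemma card_greater: "card {m. (j::'n::{finite,linorder}) < m} = CARD('n) - pos j"
proof -
  have "{m. j < m} = UNIV - {m. m \<le> j}" by auto
  then show ?thesis unfolding pos_def by (simp add: card_Diff_subset)
qed

text \<open>The coefficients a_rq of f, its gradient, its Hessian and its (constant) third
  derivatives d3f k a b = d_k d_a d_b f.\<close>

definition coef :: "'n::{finite,linorder} \<Rightarrow> 'n \<Rightarrow> real" where
  "coef r q = (if q \<le> r then 1 else 0)"

definition grad_f :: "'n::{finite,linorder} \<Rightarrow> real^('n::{finite,linorder}) \<Rightarrow> real" where
  "grad_f k y = (\<Sum>q\<in>UNIV. coef k q * (y$q * y$q)) + 2 * (y$k * (\<Sum>r\<in>UNIV. coef r k * y$r))"

definition d3f :: "'n::{finite,linorder} \<Rightarrow> 'n \<Rightarrow> 'n \<Rightarrow> real" where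
  "d3f k a b = 2 * ((if a = b then coef k b else 0) + (if k = b then coef a k else 0)
                   + (if k = a then coef b k else 0))"

definition hess_f :: "'n::{finite,linorder} \<Rightarrow> 'n \<Rightarrow> real^('n::{finite,linorder}) \<Rightarrow> real" where
  "hess_f k a y = (\<Sum>b\<in>UNIV. d3f k a b * y$b)"

lemma d3f_swap12: "d3f k a b = d3f a k b"
  unfolding d3f_def by auto

lemma d3f_swap23: "d3f k a b = d3f k b a"
  unfolding d3f_def by auto

lemma fgraph_alt: "fgraph = (\<lambda>y. \<Sum>r\<in>UNIV. \<Sum>q\<in>UNIV. coef r q * (y$r * (y$q * y$q)))"
  unfolding fgraph_def coef_def by (auto simp: pos_le_iff power2_eq_square intro!: ext sum.cong)

lemma smooth_fn_fgraph: "smooth_fn fgraph"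
  unfolding fgraph_alt by (intro smooth_fn_sum smooth_fn_mult smooth_fn_const smooth_fn_coord) auto

lemma smooth_fn_grad_f[simp, intro]: "smooth_fn (grad_f k)"
  unfolding grad_f_def[abs_def] by (intro smooth_fn_sum smooth_fn_mult smooth_fn_add) auto

lemma smooth_fn_hess_f[simp, intro]: "smooth_fn (hess_f k a)"
  unfolding hess_f_def[abs_def] by (intro smooth_fn_sum smooth_fn_mult) auto

lemma grad_f_0[simp]: "grad_f k 0 = 0"
  by (simp add: grad_f_def)

lemma hess_f_0[simp]: "hess_f k a 0 = 0"
  by (simp add: hess_f_def)

lemma pd_fgraph: "pd (k::'n::{finite,linorder}) fgraph = grad_f k"
proof (rule ext)
  fix y :: "real^'n::{finite,linorder}"
  have "pd k fgraph y = (\<Sum>r\<in>UNIV. \<Sum>q\<in>UNIV. coef r q * ((if r = k then 1 else 0) * (y$q * y$q)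
        + y$r * ((if q = k then 1 else 0) * y$q + y$q * (if q = k then 1 else 0))))"
    by (simp add: fgraph_alt pd_sum_fn pd_mult_fn pd_coord pd_const smooth_fn_sum smooth_fn_mult
        smooth_fn_const smooth_fn_coord)
  also have "\<dots> = (\<Sum>r\<in>UNIV. \<Sum>q\<in>UNIV. (if r = k then coef k q * (y$q * y$q) else 0)
      + (if q = k then 2 * (coef r k * y$r * y$k) else 0))"
    by (intro sum.cong refl) (auto simp: algebra_simps)
  also have "\<dots> = grad_f k y"
    by (simp add: sum.distrib grad_f_def sum_distrib_left algebra_simps sum.swap[of _ UNIV UNIV])
  finally show "pd k fgraph y = grad_f k y" .
qed

lemma pd_grad_f: "pd (a::'n::{finite,linorder}) (grad_f k) = hess_f k a"
proof (rule ext)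
  fix y :: "real^'n::{finite,linorder}"
  have "pd a (grad_f k) y = 2 * coef k a * y$a
      + 2 * ((if k = a then 1 else 0) * (\<Sum>r\<in>UNIV. coef r k * y$r) + y$k * coef a k)"
    by (simp add: grad_f_def[abs_def] pd_add_fn pd_sum_fn pd_mult_fn pd_coord pd_const_fn
        smooth_fn_sum smooth_fn_mult smooth_fn_add smooth_fn_const smooth_fn_coord
        if_distrib[of "\<lambda>x. _ * x"] algebra_simps cong: if_cong)
  also have "\<dots> = (\<Sum>b\<in>UNIV. (if b = a then 2 * coef k a * y$a else 0)
      + (if b = k then 2 * coef a k * y$k else 0) + (if k = a then 2 * (coef b k * y$b) else 0))"
    by (simp add: sum.distrib sum_distrib_left)
  also have "\<dots> = hess_f k a y"
    unfolding hess_f_def d3f_def by (intro sum.cong refl) (auto simp: algebra_simps)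
  finally show "pd a (grad_f k) y = hess_f k a y" .
qed

lemma pd_hess_f: "pd (b::'n::{finite,linorder}) (hess_f k a) = (\<lambda>y. d3f k a b)"
  by (simp add: hess_f_def[abs_def] pd_sum_fn pd_mult_fn pd_coord pd_const_fn
      smooth_fn_mult smooth_fn_const smooth_fn_coord if_distrib[of "\<lambda>x. _ * x"] cong: if_cong)

lemma grad_f_vanishes_to_2: "vanishes_to 2 (grad_f k)"
proof -
  have "vanishes_to 1 (pd d (grad_f k))" for d
    unfolding pd_grad_f by (rule vanishes_to_1) simp
  then show ?thesis using vanishes_to_Suc[of "grad_f k" 1] by (simp add: numeral_2_eq_2)
qed

section \<open>Inverse matrices and their derivatives\<close>

text \<open>matrix_inv is defined by choice; it is the two-sided inverse whenever one exists.\<close>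

lemma matrix_inv_unique:
  fixes A B :: "real^'n::finite^'n"
  assumes "A ** B = mat 1" "B ** A = mat 1"
  shows "matrix_inv A = B"
proof -
  have "A ** matrix_inv A = mat 1 \<and> matrix_inv A ** A = mat 1"
    unfolding matrix_inv_def by (rule someI[of _ B]) (use assms in simp)
  then have "matrix_inv A ** A = mat 1" by simp
  then have "matrix_inv A ** (A ** B) = B" by (simp add: matrix_mul_assoc)
  then show ?thesis using assms by simp
qed

lemma matrix_inv_props:
  fixes A :: "real^'n::finite^'n"
  assumes "det A \<noteq> 0"
  shows "A ** matrix_inv A = mat 1" "matrix_inv A ** A = mat 1"
proof -
  have "invertible A" using assms by (simp add: invertible_det_nz)
  then obtain B where "A ** B = mat 1 \<and> B ** A = mat 1" unfolding invertible_def by blast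
  then have "A ** matrix_inv A = mat 1 \<and> matrix_inv A ** A = mat 1"
    unfolding matrix_inv_def by (rule someI)
  then show "A ** matrix_inv A = mat 1" "matrix_inv A ** A = mat 1" by auto
qed

lemma matrix_inv_cramer:
  fixes A :: "real^'n::finite^'n"
  assumes d: "det A \<noteq> 0"
  shows "matrix_inv A $ k $ q = det (\<chi> i j. if j = k then (if i = q then 1 else 0) else A $ i $ j) / det A"
proof -
  let ?x = "matrix_inv A *v axis q 1"
  have "A *v ?x = axis q 1"
    by (simp add: matrix_vector_mul_assoc matrix_inv_props[OF d])
  then have "?x = (\<chi> k. det (\<chi> i j. if j = k then axis q 1 $ i else A $ i $ j) / det A)"
    using cramer[OF d] by blast
  then have "?x $ k = det (\<chi> i j. if j = k then axis q 1 $ i else A $ i $ j) / det A" by simp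
  moreover have "?x $ k = matrix_inv A $ k $ q"
    by (simp add: matrix_vector_mult_def axis_def if_distrib cong: if_cong)
  moreover have "(\<chi> i j. if j = k then axis q 1 $ i else A $ i $ j) = (\<chi> i j. if j = k then (if i = q then 1 else 0) else A $ i $ j)"
    by (simp add: vec_eq_iff axis_def)
  ultimately show ?thesis by simp
qed

text \<open>Determinants, and hence (by Cramer's rule) entries of inverses, of differentiable
  matrix-valued functions of one variable are differentiable.\<close>

lemma differentiable_prod_real:
  fixes f :: "'i \<Rightarrow> real \<Rightarrow> real"
  shows "finite I \<Longrightarrow> (\<And>i. i \<in> I \<Longrightarrow> f i differentiable (at x within S)) \<Longrightarrow>
    (\<lambda>x. \<Prod>i\<in>I. f i x) differentiable (at x within S)"
proof (induction I rule: finite_induct)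
  case empty then show ?case by simp
next
  case (insert a I)
  then show ?case by (simp add: differentiable_mult)
qed

lemma det_differentiable:
  fixes M :: "real \<Rightarrow> real^'n::finite^'n"
  assumes "\<And>i j. (\<lambda>s. M s $ i $ j) differentiable (at s0 within X)"
  shows "(\<lambda>s. det (M s)) differentiable (at s0 within X)"
  unfolding det_def
  by (intro differentiable_sum ballI differentiable_mult differentiable_const differentiable_prod_real assms)
     (auto simp: finite_permutations)

lemma matrix_inv_differentiable:
  fixes M :: "real \<Rightarrow> real^'n::finite^'n"
  assumes X: "s0 \<in> X" and nz: "\<And>s. s \<in> X \<Longrightarrow> det (M s) \<noteq> 0"
    and dM: "\<And>i j. (\<lambda>s. M s $ i $ j) differentiable (at s0 within X)"
  shows "\<exists>D. ((\<lambda>s. matrix_inv (M s) $ k $ q) has_real_derivative D) (at s0 within X)"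
proof -
  let ?N = "\<lambda>s. (\<chi> i j. if j = k then (if i = q then 1 else 0) else M s $ i $ j) :: real^'n^'n"
  have dN: "(\<lambda>s. ?N s $ i $ j) differentiable (at s0 within X)" for i j
    by (cases "j = k") (simp_all add: dM)
  have "(\<lambda>s. det (?N s) / det (M s)) differentiable (at s0 within X)"
    by (intro differentiable_divide det_differentiable dN dM nz X)
  then obtain D where D: "((\<lambda>s. det (?N s) / det (M s)) has_real_derivative D) (at s0 within X)"
    by (auto simp: real_differentiable_def)
  have "((\<lambda>s. matrix_inv (M s) $ k $ q) has_real_derivative D) (at s0 within X)"
    by (rule has_field_derivative_transform_within[OF D zero_less_one X])
       (simp add: matrix_inv_cramer[OF nz])
  then show ?thesis by blast
qed

text \<open>Differentiating the identity inverse(M) M = 1 gives the familiar formula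
  (inverse M)' = - inverse M * M' * inverse M, first contracted with M and then solved.\<close>

lemma matrix_inv_derivative_times:
  fixes M :: "real \<Rightarrow> real^'n::finite^'n"
  assumes W: "open W" "s0 \<in> W" and nz: "\<And>s. s \<in> W \<Longrightarrow> det (M s) \<noteq> 0"
    and Md: "\<And>i j. ((\<lambda>s. M s $ i $ j) has_real_derivative Md i j) (at s0)"
    and IVd: "\<And>i j. ((\<lambda>s. matrix_inv (M s) $ i $ j) has_real_derivative IVd i j) (at s0)"
  shows "(\<Sum>r\<in>UNIV. IVd m r * M s0 $ r $ q) = - (\<Sum>r\<in>UNIV. matrix_inv (M s0) $ m $ r * Md r q)"
proof -
  have prod: "((\<lambda>s. \<Sum>r\<in>UNIV. matrix_inv (M s) $ m $ r * M s $ r $ q) has_real_derivative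
      (\<Sum>r\<in>UNIV. IVd m r * M s0 $ r $ q + matrix_inv (M s0) $ m $ r * Md r q)) (at s0)"
  proof (rule DERIV_sum)
    fix r
    show "((\<lambda>s. matrix_inv (M s) $ m $ r * M s $ r $ q) has_real_derivative
        IVd m r * M s0 $ r $ q + matrix_inv (M s0) $ m $ r * Md r q) (at s0)"
      using DERIV_mult[OF IVd[of m r] Md[of r q]] by (simp add: algebra_simps)
  qed
  have "((\<lambda>s. \<Sum>r\<in>UNIV. matrix_inv (M s) $ m $ r * M s $ r $ q) has_real_derivative 0) (at s0)"
  proof (rule has_field_derivative_transform_within_open[OF _ W])
    show "((\<lambda>s. (if m = q then 1 else 0)) has_real_derivative 0) (at s0)" by simp
    fix s assume "s \<in> W"
    then have "matrix_inv (M s) ** M s = mat 1" using matrix_inv_props nz by blast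
    then have "(matrix_inv (M s) ** M s) $ m $ q = (if m = q then 1 else 0)" by (simp add: mat_def)
    then show "(if m = q then 1 else 0) = (\<Sum>r\<in>UNIV. matrix_inv (M s) $ m $ r * M s $ r $ q)"
      by (simp add: matrix_matrix_mult_def)
  qed
  from DERIV_unique[OF prod this] show ?thesis by (simp add: sum.distrib eq_neg_iff_add_eq_0)
qed

lemma matrix_inv_has_derivative:
  fixes M :: "real \<Rightarrow> real^'n::finite^'n"
  assumes W: "open W" "s0 \<in> W" and nz: "\<And>s. s \<in> W \<Longrightarrow> det (M s) \<noteq> 0"
    and Md: "\<And>i j. ((\<lambda>s. M s $ i $ j) has_real_derivative Md i j) (at s0)"
  shows "((\<lambda>s. matrix_inv (M s) $ m $ p) has_real_derivative
      (- (\<Sum>q\<in>UNIV. \<Sum>r\<in>UNIV. matrix_inv (M s0) $ m $ r * Md r q * matrix_inv (M s0) $ q $ p))) (at s0)"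
proof -
  have atW: "at s0 within W = at s0" by (rule at_within_open[OF W(2,1)])
  have "(\<lambda>s. M s $ i $ j) differentiable (at s0 within W)" for i j
    using Md[of i j] atW by (auto simp: real_differentiable_def)
  then have "\<forall>m p. \<exists>D. ((\<lambda>s. matrix_inv (M s) $ m $ p) has_real_derivative D) (at s0)"
    using matrix_inv_differentiable[OF W(2) nz] atW by auto
  then obtain IVd
    where IVd: "\<And>m p. ((\<lambda>s. matrix_inv (M s) $ m $ p) has_real_derivative IVd m p) (at s0)"
    by metis
  let ?IV = "matrix_inv (M s0)" and ?M0 = "M s0"
  have right_inv: "(\<Sum>q\<in>UNIV. ?M0 $ r $ q * ?IV $ q $ p) = (if r = p then 1 else 0)" for r
  proof -
    have "?M0 ** ?IV = mat 1" using matrix_inv_props nz W by blast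
    then have "(?M0 ** ?IV) $ r $ p = (if r = p then 1 else 0)" by (simp add: mat_def)
    then show ?thesis by (simp add: matrix_matrix_mult_def)
  qed
  have "IVd m p = (\<Sum>r\<in>UNIV. IVd m r * (if r = p then 1 else 0))"
    by (simp add: if_distrib cong: if_cong)
  also have "\<dots> = (\<Sum>r\<in>UNIV. \<Sum>q\<in>UNIV. IVd m r * ?M0 $ r $ q * ?IV $ q $ p)"
    by (simp add: right_inv[symmetric] sum_distrib_left mult.assoc)
  also have "\<dots> = (\<Sum>q\<in>UNIV. (\<Sum>r\<in>UNIV. IVd m r * ?M0 $ r $ q) * ?IV $ q $ p)"
    by (subst sum.swap) (simp add: sum_distrib_right)
  also have "\<dots> = - (\<Sum>q\<in>UNIV. \<Sum>r\<in>UNIV. ?IV $ m $ r * Md r q * ?IV $ q $ p)"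
    by (simp add: matrix_inv_derivative_times[OF W nz Md IVd] sum_distrib_right sum_negf)
  finally show ?thesis using IVd[of m p] by simp
qed

lemma rank_one_update_inverse:
  fixes v :: "real^'n::finite"
  defines "A \<equiv> (\<chi> i j. (if i = j then 1 else 0) + v$i * v$j) :: real^'n^'n"
    and "B \<equiv> (\<chi> i j. (if i = j then 1 else 0) - v$i * v$j / (1 + v \<bullet> v)) :: real^'n^'n"
  shows "matrix_inv A = B"
proof -
  have w: "1 + v \<bullet> v \<noteq> 0" using inner_ge_zero[of v] by linarith
  have absorb: "c / (1 + v \<bullet> v) * (v \<bullet> v) = c - c / (1 + v \<bullet> v)" for c
    using w by (simp add: field_simps)
  have AB: "A ** B = mat 1"
  proof -
    have "(A ** B) $ i $ j = (if i = j then 1 else 0)" for i j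
    proof -
      have "(A ** B) $ i $ j = (\<Sum>k\<in>UNIV. A $ i $ k * B $ k $ j)"
        by (simp add: matrix_matrix_mult_def)
      also have "\<dots> = (\<Sum>k\<in>UNIV. (if i = k then (if k = j then 1 else 0) - v$k * v$j / (1 + v \<bullet> v) else 0)
          + (if k = j then v$i * v$k else 0) - v$i * v$j / (1 + v \<bullet> v) * (v$k * v$k))"
        unfolding A_def B_def by (intro sum.cong refl) (auto simp: algebra_simps)
      also have "\<dots> = (if i = j then 1 else 0) - v$i * v$j / (1 + v \<bullet> v) + v$i * v$j
          - v$i * v$j / (1 + v \<bullet> v) * (v \<bullet> v)"
        by (simp add: sum.distrib sum_subtractf sum_distrib_left[symmetric] sum_divide_distrib[symmetric]
            inner_vec_def)
      also have "\<dots> = (if i = j then 1 else 0)"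
        by (simp only: absorb)
      finally show ?thesis .
    qed
    then show ?thesis by (simp add: vec_eq_iff mat_def)
  qed
  have "transpose A = A" "transpose B = B"
    unfolding A_def B_def by (auto simp: transpose_def vec_eq_iff mult.commute)
  then have "B ** A = mat 1"
    using arg_cong[OF AB, of transpose] by (simp add: matrix_transpose_mul transpose_mat)
  with AB show ?thesis by (rule matrix_inv_unique)
qed

lemma pos_def_det_nonzero:
  fixes A :: "real^'n::finite^'n"
  assumes pd: "\<And>v. v \<noteq> 0 \<Longrightarrow> inner v (A *v v) > 0"
  shows "det A \<noteq> 0"
proof -
  have "inj ((*v) A)"
  proof (rule injI)
    fix u w assume "A *v u = A *v w"
    then have "A *v (u - w) = 0" by (simp add: matrix_vector_mult_diff_distrib)
    then have "inner (u - w) (A *v (u - w)) = 0" by simp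
    then show "u = w" using pd[of "u - w"] by (cases "u - w = 0") auto
  qed
  then obtain B where "B ** A = mat 1" using matrix_left_invertible_injective by blast
  then have "A ** B = mat 1" using matrix_left_right_inverse by blast
  then have "invertible A" unfolding invertible_def using \<open>B ** A = mat 1\<close> by blast
  then show ?thesis by (simp add: invertible_det_nz)
qed


section \<open>The induced metric g0\<close>

abbreviation g0 where "g0 \<equiv> induced_metric fgraph"

lemma pd_graph_emb: "pd (i::'n::{finite,linorder}) (graph_emb fgraph) x = (axis i 1, grad_f i x)"
proof (rule pd_eqI)
  have l1: "((\<lambda>s. x + s *\<^sub>R axis i 1) has_vector_derivative axis i 1) (at 0)"
    by (auto intro!: derivative_eq_intros)
  have l2: "((\<lambda>s. fgraph (x + s *\<^sub>R axis i 1)) has_vector_derivative grad_f i x) (at 0)"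
    using pd_along_axis[OF smooth_fn_differentiable[OF smooth_fn_fgraph], of x i] pd_fgraph[of i]
    by (simp add: has_real_derivative_iff_has_vector_derivative)
  show "((\<lambda>s. graph_emb fgraph (x + s *\<^sub>R axis i 1)) has_vector_derivative (axis i 1, grad_f i x)) (at 0)"
    unfolding graph_emb_def by (rule has_vector_derivative_Pair[OF l1 l2])
qed

lemma g0_entry: "g0 x $ i $ j = (if i = j then 1 else 0) + grad_f i x * grad_f j x"
  unfolding induced_metric_def by (simp add: pd_graph_emb inner_axis_axis)

definition grad_weight :: "real^('n::{finite,linorder}) \<Rightarrow> real" where
  "grad_weight x = 1 + (\<Sum>r\<in>UNIV. grad_f r x * grad_f r x)"

definition g0_inv :: "real^('n::{finite,linorder}) \<Rightarrow> real^('n::{finite,linorder})^('n::{finite,linorder})" where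
  "g0_inv x = (\<chi> m l. (if m = l then 1 else 0) - grad_f m x * grad_f l x / grad_weight x)"

lemma grad_weight_pos: "grad_weight x > 0"
proof -
  have "(\<Sum>r\<in>UNIV. grad_f r x * grad_f r x) \<ge> 0" by (intro sum_nonneg) auto
  then show ?thesis unfolding grad_weight_def by simp
qed

lemma inv_g0: "matrix_inv (g0 x) = g0_inv x"
proof -
  let ?v = "\<chi> r. grad_f r x"
  have "g0 x = (\<chi> i j. (if i = j then 1 else 0) + ?v$i * ?v$j)"
    by (simp add: vec_eq_iff g0_entry)
  moreover have "g0_inv x = (\<chi> i j. (if i = j then 1 else 0) - ?v$i * ?v$j / (1 + ?v \<bullet> ?v))"
    by (simp add: g0_inv_def grad_weight_def inner_vec_def)
  ultimately show ?thesis by (simp only: rank_one_update_inverse)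
qed


section \<open>Christoffel symbols and curvature of g0 near the origin\<close>

text \<open>The non-constant part of g0 consists of the products grad_prod j l = f_j f_l, which
  vanish to order 4.  Consequently the Christoffel symbols Gam0 of g0 vanish to order 3 and agree
  with the bracket (1/2)(d_i f_j f_l + d_j f_i f_l - d_l f_i f_j) up to an error vanishing to
  order 7, and the curvature of g0 vanishes at the origin.\<close>

definition grad_prod :: "'n::{finite,linorder} \<Rightarrow> 'n \<Rightarrow> real^('n::{finite,linorder}) \<Rightarrow> real" where
  "grad_prod j l = (\<lambda>y. grad_f j y * grad_f l y)"

lemma smooth_fn_grad_prod[simp,intro]: "smooth_fn (grad_prod j l)"
  unfolding grad_prod_def by (intro smooth_fn_mult smooth_fn_grad_f)

lemma grad_prod_vanishes_to_4: "vanishes_to 4 (grad_prod j l)"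
  using vanishes_to_mult[OF smooth_fn_grad_f smooth_fn_grad_f grad_f_vanishes_to_2 grad_f_vanishes_to_2]
  unfolding grad_prod_def by simp

lemma pd_g0: "pd i (\<lambda>y. g0 y $ j $ l) x = pd i (grad_prod j l) x"
proof -
  have "pd i (\<lambda>y. g0 y $ j $ l) x = pd i (\<lambda>y. (if j = l then 1 else 0) + grad_prod j l y) x"
    by (simp add: g0_entry grad_prod_def)
  also have "\<dots> = pd i (grad_prod j l) x"
    by (subst pd_add) (auto simp: pd_const)
  finally show ?thesis .
qed

definition bracket :: "'n::{finite,linorder} \<Rightarrow> 'n \<Rightarrow> 'n \<Rightarrow> real^('n::{finite,linorder}) \<Rightarrow> real" where
  "bracket i j l = (\<lambda>y. pd i (grad_prod j l) y + pd j (grad_prod i l) y - pd l (grad_prod i j) y)"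

definition Gam0 :: "'n::{finite,linorder} \<Rightarrow> 'n \<Rightarrow> 'n \<Rightarrow> real^('n::{finite,linorder}) \<Rightarrow> real" where
  "Gam0 m i j = (\<lambda>y. (1/2) * (\<Sum>l\<in>UNIV. g0_inv y $ m $ l * bracket i j l y))"

lemma Gam_g0: "Gam g0 y m i j = Gam0 m i j y"
  unfolding Gam_def Gam0_def bracket_def by (simp add: inv_g0 pd_g0)

lemma Gam_g0_fn: "(\<lambda>y. Gam g0 y m i j) = Gam0 m i j"
  by (rule ext) (rule Gam_g0)

lemma smooth_fn_grad_weight[simp,intro]: "smooth_fn grad_weight"
  unfolding grad_weight_def[abs_def] by (intro smooth_fn_add smooth_fn_sum smooth_fn_mult) auto

lemma grad_weight_nonzero[simp]: "grad_weight y \<noteq> 0"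
  using grad_weight_pos[of y] by simp

lemma smooth_fn_bracket[simp,intro]: "smooth_fn (bracket i j l)"
  unfolding bracket_def by (intro smooth_fn_add smooth_fn_diff smooth_fn_pd smooth_fn_grad_prod)

lemma smooth_fn_g0_inv[simp,intro]: "smooth_fn (\<lambda>y. g0_inv y $ m $ l)"
proof -
  have "(\<lambda>y. g0_inv y $ m $ l) = (\<lambda>y. (if m = l then 1 else 0) - grad_f m y * grad_f l y / grad_weight y)"
    by (simp add: g0_inv_def)
  moreover have "smooth_fn (\<lambda>y. (if m = l then 1 else 0) - grad_f m y * grad_f l y / grad_weight y)"
    by (intro smooth_fn_diff smooth_fn_const smooth_fn_divide smooth_fn_mult) auto
  ultimately show ?thesis by simp
qed

lemma smooth_fn_Gam0[simp,intro]: "smooth_fn (Gam0 m i j)"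
  unfolding Gam0_def by (intro smooth_fn_mult smooth_fn_const smooth_fn_sum) auto

lemma bracket_vanishes_to_3: "vanishes_to 3 (bracket i j l)"
proof -
  have "vanishes_to 3 (pd a (grad_prod b c))" for a b c
    using vanishes_to_pd[OF grad_prod_vanishes_to_4] by simp
  then show ?thesis
    unfolding bracket_def by (intro vanishes_to_add vanishes_to_diff smooth_fn_add smooth_fn_pd) auto
qed

definition Gam0_rest :: "'n::{finite,linorder} \<Rightarrow> 'n \<Rightarrow> 'n \<Rightarrow> real^('n::{finite,linorder}) \<Rightarrow> real" where
  "Gam0_rest m i j = (\<lambda>y. (1/2) * (\<Sum>l\<in>UNIV. (grad_f m y * grad_f l y / grad_weight y) * bracket i j l y))"

lemma smooth_fn_Gam0_rest[simp,intro]: "smooth_fn (Gam0_rest m i j)"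
  unfolding Gam0_rest_def by (intro smooth_fn_mult smooth_fn_const smooth_fn_sum smooth_fn_divide) auto

lemma Gam0_rest_vanishes_to_7: "vanishes_to 7 (Gam0_rest m i j)"
proof -
  have "vanishes_to 4 (\<lambda>y. grad_f m y * grad_f l y / grad_weight y)" for l
  proof -
    have "vanishes_to 4 (\<lambda>y. grad_f m y * grad_f l y)"
      using grad_prod_vanishes_to_4[of m l] by (simp add: grad_prod_def)
    then show ?thesis by (intro vanishes_to_divide) auto
  qed
  then have "vanishes_to (4 + 3) (\<lambda>y. (grad_f m y * grad_f l y / grad_weight y) * bracket i j l y)" for l
    by (intro vanishes_to_mult bracket_vanishes_to_3) (auto intro!: smooth_fn_divide smooth_fn_mult)
  then show ?thesis unfolding Gam0_rest_def
    by (intro vanishes_to_cmult vanishes_to_sum) (auto intro!: smooth_fn_sum smooth_fn_divide smooth_fn_mult)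
qed

lemma Gam0_split: "Gam0 m i j = (\<lambda>y. (1/2) * bracket i j m y - Gam0_rest m i j y)"
proof (rule ext)
  fix y
  have "(\<Sum>l\<in>UNIV. g0_inv y $ m $ l * bracket i j l y) =
        (\<Sum>l\<in>UNIV. (if m = l then bracket i j l y else 0)
        - (grad_f m y * grad_f l y / grad_weight y) * bracket i j l y)"
    unfolding g0_inv_def by (intro sum.cong refl) (auto simp: algebra_simps)
  also have "\<dots> = bracket i j m y - (\<Sum>l\<in>UNIV. (grad_f m y * grad_f l y / grad_weight y) * bracket i j l y)"
    by (simp add: sum_subtractf)
  finally show "Gam0 m i j y = (1/2) * bracket i j m y - Gam0_rest m i j y"
    unfolding Gam0_def Gam0_rest_def by (simp add: algebra_simps)
qed

lemma iter_pd_Gam0: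
  assumes l: "length ds < 7"
  shows "iter_pd ds (Gam0 m i j) 0 = (1/2) * iter_pd ds (bracket i j m) 0"
proof -
  have sm: "smooth_fn (\<lambda>y. (1/2) * bracket i j m y)" by (intro smooth_fn_mult) auto
  have "iter_pd ds (Gam0 m i j) 0 = (1/2) * iter_pd ds (bracket i j m) 0 - iter_pd ds (Gam0_rest m i j) 0"
    unfolding Gam0_split iter_pd_diff[OF sm smooth_fn_Gam0_rest] iter_pd_cmult[OF smooth_fn_bracket] by simp
  moreover have "iter_pd ds (Gam0_rest m i j) 0 = 0" by (rule vanishes_toD[OF Gam0_rest_vanishes_to_7 l])
  ultimately show ?thesis by simp
qed

lemma Gam0_vanishes_to_3: "vanishes_to 3 (Gam0 m i j)"
  unfolding vanishes_to_def
proof (intro allI impI)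
  fix ds :: "'a list"
  assume "length ds < 3"
  then show "iter_pd ds (Gam0 m i j) 0 = 0"
    using iter_pd_Gam0[of ds m i j] vanishes_toD[OF bracket_vanishes_to_3, of ds] by simp
qed

definition Gam0_quad :: "'n::{finite,linorder} \<Rightarrow> 'n \<Rightarrow> 'n \<Rightarrow> 'n \<Rightarrow> real^('n::{finite,linorder}) \<Rightarrow> real" where
  "Gam0_quad i j k m = (\<lambda>y. \<Sum>p\<in>UNIV. Gam0 p j k y * Gam0 m i p y - Gam0 p i k y * Gam0 m j p y)"

lemma smooth_fn_Gam0_quad[simp,intro]: "smooth_fn (Gam0_quad i j k m)"
  unfolding Gam0_quad_def by (intro smooth_fn_sum smooth_fn_diff smooth_fn_mult) auto

lemma Gam0_quad_vanishes_to_6: "vanishes_to 6 (Gam0_quad i j k m)"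
proof -
  have "vanishes_to (3 + 3) (\<lambda>y. Gam0 a b c y * Gam0 d e f y)" for a b c d e f
    by (intro vanishes_to_mult Gam0_vanishes_to_3 smooth_fn_Gam0)
  then show ?thesis unfolding Gam0_quad_def
    by (intro vanishes_to_sum vanishes_to_diff) (auto intro!: smooth_fn_diff smooth_fn_mult)
qed

definition Rup0 :: "'n::{finite,linorder} \<Rightarrow> 'n \<Rightarrow> 'n \<Rightarrow> 'n \<Rightarrow> real^('n::{finite,linorder}) \<Rightarrow> real" where
  "Rup0 i j k m = (\<lambda>y. pd i (Gam0 m j k) y - pd j (Gam0 m i k) y + Gam0_quad i j k m y)"

lemma Rup_g0: "Rup g0 y i j k m = Rup0 i j k m y"
  unfolding Rup_def Rup0_def Gam0_quad_def by (simp add: Gam_g0 Gam_g0_fn)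

lemma smooth_fn_Rup0[simp,intro]: "smooth_fn (Rup0 i j k m)"
  unfolding Rup0_def by (intro smooth_fn_add smooth_fn_diff smooth_fn_pd) auto

lemma Rup0_at_0: "Rup0 i j k m 0 = 0"
  using vanishes_toD[OF Gam0_vanishes_to_3[of m j k], of "[i]"]
    vanishes_toD[OF Gam0_vanishes_to_3[of m i k], of "[j]"]
    vanishes_toD[OF Gam0_quad_vanishes_to_6[of i j k m], of "[]"]
  by (simp add: Rup0_def)

lemma Rm_g0_at_0: "Rm g0 i j k l 0 = 0"
  unfolding Rm_def by (simp add: Rup_g0 Rup0_at_0)

definition Ric0 :: "'n::{finite,linorder} \<Rightarrow> 'n \<Rightarrow> real^('n::{finite,linorder}) \<Rightarrow> real" where
  "Ric0 j k = (\<lambda>y. \<Sum>i\<in>UNIV. Rup0 i j k i y)"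

lemma Ric_g0: "Ric g0 y j k = Ric0 j k y"
  unfolding Ric_def Ric0_def by (simp add: Rup_g0)

lemma smooth_fn_Ric0[simp,intro]: "smooth_fn (Ric0 j k)"
  unfolding Ric0_def by (intro smooth_fn_sum) auto


section \<open>Second derivatives of the Ricci tensor of g0 at the origin\<close>

text \<open>Since grad_f vanishes to order 2 with constant Hessian d3f, the fourth derivatives of
  grad_f k * grad_f l at the origin come only from splitting the four derivatives two and two.\<close>

definition prod_jet4 :: "('n \<Rightarrow> 'n \<Rightarrow> 'n \<Rightarrow> real) \<Rightarrow> 'n \<Rightarrow> 'n \<Rightarrow> 'n \<Rightarrow> 'n \<Rightarrow> 'n \<Rightarrow> 'n \<Rightarrow> real" where
  "prod_jet4 c k l d1 d2 d3 d4 =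
     c k d1 d2 * c l d3 d4 + c k d1 d3 * c l d2 d4 + c k d1 d4 * c l d2 d3 +
     c k d2 d3 * c l d1 d4 + c k d2 d4 * c l d1 d3 + c k d3 d4 * c l d1 d2"

lemma iter_pd_grad_prod_4: "iter_pd [d1, d2, d3, d4] (grad_prod k l) 0 = prod_jet4 d3f k l d1 d2 d3 d4"
  by (simp add: prod_jet4_def grad_prod_def pd_add_fn pd_mult_fn pd_grad_f pd_hess_f pd_const_fn
      smooth_fn_add smooth_fn_mult smooth_fn_const algebra_simps)

lemma iter_pd_bracket: "iter_pd ds (bracket j k m) 0 =
   iter_pd (j # ds) (grad_prod k m) 0 + iter_pd (k # ds) (grad_prod j m) 0 - iter_pd (m # ds) (grad_prod j k) 0"
  unfolding bracket_def by (simp add: iter_pd_add iter_pd_diff smooth_fn_add smooth_fn_pd)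

text \<open>Up to second order at the origin, the curvature of g0 is the linearised one: the inverse
  metric correction and the quadratic Christoffel terms vanish to higher order.\<close>

lemma iter_pd_Rup0_2:
  "iter_pd [b, a] (Rup0 i j k m) 0 =
     (1/2) * iter_pd [i, b, a] (bracket j k m) 0 - (1/2) * iter_pd [j, b, a] (bracket i k m) 0"
proof -
  have "iter_pd [b, a] (Rup0 i j k m) 0 = iter_pd [i, b, a] (Gam0 m j k) 0
      - iter_pd [j, b, a] (Gam0 m i k) 0 + iter_pd [b, a] (Gam0_quad i j k m) 0"
    unfolding Rup0_def by (simp add: pd_add_fn pd_diff_fn smooth_fn_diff smooth_fn_add smooth_fn_pd)
  moreover have "iter_pd [b, a] (Gam0_quad i j k m) 0 = 0"
    by (rule vanishes_toD[OF Gam0_quad_vanishes_to_6]) simp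
  ultimately show ?thesis
    using iter_pd_Gam0[of "[i, b, a]" m j k] iter_pd_Gam0[of "[j, b, a]" m i k] by simp
qed

text \<open>The i-th summand of the second derivative d_a d_b Ric_jk at the origin, as a polynomial
  in the third derivatives c of f.\<close>

definition ric_jet :: "('n \<Rightarrow> 'n \<Rightarrow> 'n \<Rightarrow> real) \<Rightarrow> 'n \<Rightarrow> 'n \<Rightarrow> 'n \<Rightarrow> 'n \<Rightarrow> 'n \<Rightarrow> real" where
  "ric_jet c a b j k i = prod_jet4 c k i j i b a + prod_jet4 c j i k i b a - prod_jet4 c j k i i b a
     - (prod_jet4 c k i i j b a + prod_jet4 c i i k j b a - prod_jet4 c i k i j b a)"

lemma iter_pd_Ric0_2: "iter_pd [b, a] (Ric0 j k) 0 = (1/2) * (\<Sum>i\<in>UNIV. ric_jet d3f a b j k i)"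
proof -
  have "iter_pd [b, a] (Ric0 j k) 0 = (\<Sum>i\<in>UNIV. iter_pd [b, a] (Rup0 i j k i) 0)"
    unfolding Ric0_def by (subst iter_pd_sum) auto
  also have "\<dots> = (\<Sum>i\<in>UNIV. (1/2) * ric_jet d3f a b j k i)"
    by (simp only: iter_pd_Rup0_2 iter_pd_bracket iter_pd_grad_prod_4) (simp add: ric_jet_def algebra_simps)
  finally show ?thesis by (simp add: sum_distrib_left)
qed

section \<open>The rate of change of the curvature at the origin\<close>

text \<open>Under a variation h of a flat metric with vanishing first derivatives at a point, the
  curvature changes at that point by dR_ijkl = (1/2)(h_jk,il + h_il,jk - h_ik,jl - h_jl,ik).
  For the Ricci flow h = -2 Ric(g0); ric_hess collects the second derivatives of h at the origin
  and dRm0 is the resulting rate of change.  Inserting the Ricci jets computed above, the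
  resulting combination of quadratic terms in d3f collapses to the Gauss-type expression
  curv_rate.\<close>

definition ric_hess :: "'n::{finite,linorder} \<Rightarrow> 'n \<Rightarrow> 'n \<Rightarrow> 'n \<Rightarrow> real" where
  "ric_hess a b k l = - 2 * iter_pd [b, a] (Ric0 k l) 0"

definition dRm0 :: "'n::{finite,linorder} \<Rightarrow> 'n \<Rightarrow> 'n \<Rightarrow> 'n \<Rightarrow> real" where
  "dRm0 i j k l = (1/2) * (ric_hess i j k l + ric_hess i k j l - ric_hess i l j k
      - ric_hess j i k l - ric_hess j k i l + ric_hess j l i k)"

definition curv_rate :: "'n::{finite,linorder} \<Rightarrow> 'n \<Rightarrow> 'n \<Rightarrow> 'n \<Rightarrow> real" where
  "curv_rate i j k l = (\<Sum>m\<in>UNIV. d3f i l m * d3f j k m - d3f i k m * d3f j l m)"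

lemma ric_jet_identity:
  fixes c :: "'n \<Rightarrow> 'n \<Rightarrow> 'n \<Rightarrow> real"
  assumes s1: "\<And>a b d. c a b d = c b a d" and s2: "\<And>a b d. c a b d = c a d b"
  shows "- (1/2) * (ric_jet c i j k l m + ric_jet c i k j l m - ric_jet c i l j k m
      - ric_jet c j i k l m - ric_jet c j k i l m + ric_jet c j l i k m)
    = 2 * (c i l m * c j k m - c i k m * c j l m)"
  unfolding ric_jet_def prod_jet4_def by (simp add: s1 s2 algebra_simps)

lemma dRm0_curv_rate: "dRm0 i j k l = 2 * curv_rate i j k l"
proof -
  have "dRm0 i j k l = (\<Sum>m\<in>UNIV. - (1/2) * (ric_jet d3f i j k l m + ric_jet d3f i k j l m
      - ric_jet d3f i l j k m - ric_jet d3f j i k l m - ric_jet d3f j k i l m + ric_jet d3f j l i k m))"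
    unfolding dRm0_def ric_hess_def iter_pd_Ric0_2
    by (simp add: sum.distrib sum_subtractf sum_distrib_left sum_negf algebra_simps)
  also have "\<dots> = (\<Sum>m\<in>UNIV. 2 * (d3f i l m * d3f j k m - d3f i k m * d3f j l m))"
    by (intro sum.cong refl ric_jet_identity) (auto intro: d3f_swap12 d3f_swap23)
  also have "\<dots> = 2 * curv_rate i j k l" unfolding curv_rate_def by (simp add: sum_distrib_left)
  finally show ?thesis .
qed


section \<open>Evaluation of curv_rate for the cubic f\<close>

text \<open>d3f a b is supported at the single index min a b when a and b differ; on the diagonal
  d3f a a is 6 at a and 2 above a.  Hence curv_rate vanishes unless {i, j} = {k, l}, and the
  sectional values can be counted.\<close>

lemma d3f_offdiag: "a \<noteq> b \<Longrightarrow> d3f a b m = (if m = min a b then 2 else 0)"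
  unfolding d3f_def coef_def by (auto simp: min_def)

lemma d3f_diag: "d3f a a m = (if m = a then 6 else if a < m then 2 else 0)"
  unfolding d3f_def coef_def by auto

lemma sum_d3f_offdiag_left: "a \<noteq> b \<Longrightarrow> (\<Sum>m\<in>UNIV. d3f a b m * X m) = 2 * X (min a b)"
proof -
  assume ab: "a \<noteq> b"
  have "(\<Sum>m\<in>UNIV. d3f a b m * X m) = (\<Sum>m\<in>UNIV. if m = min a b then 2 * X m else 0)"
    using ab by (intro sum.cong refl) (simp add: d3f_offdiag)
  then show ?thesis by simp
qed

lemma sum_d3f_offdiag_right: "a \<noteq> b \<Longrightarrow> (\<Sum>m\<in>UNIV. X m * d3f a b m) = 2 * X (min a b)"
proof -
  assume ab: "a \<noteq> b"
  have "(\<Sum>m\<in>UNIV. X m * d3f a b m) = (\<Sum>m\<in>UNIV. if m = min a b then 2 * X m else 0)"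
    using ab by (intro sum.cong refl) (simp add: d3f_offdiag)
  then show ?thesis by simp
qed

lemma curv_rate_split:
  "curv_rate i j k l = (\<Sum>m\<in>UNIV. d3f i l m * d3f j k m) - (\<Sum>m\<in>UNIV. d3f i k m * d3f j l m)"
  unfolding curv_rate_def by (simp add: sum_subtractf)

lemma curv_rate_zero:
  fixes i j k l :: "'n::{finite,linorder}"
  assumes "{i, j} \<noteq> {k, l}"
  shows "curv_rate i j k l = 0"
proof (cases "i = j \<or> k = l")
  case True
  then show ?thesis unfolding curv_rate_def by (auto simp: mult.commute)
next
  case False
  then have ij: "i \<noteq> j" and kl: "k \<noteq> l" by auto
  have jk: "i = l \<Longrightarrow> j \<noteq> k" using assms by (auto simp: insert_commute)
  have jl: "i = k \<Longrightarrow> j \<noteq> l" using assms by (auto simp: insert_commute)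
  have A: "(\<Sum>m\<in>UNIV. d3f i l m * d3f j k m) =
      (if i \<noteq> l then 2 * d3f j k (min i l) else 2 * d3f i l (min j k))"
  proof (cases "i = l")
    case True then show ?thesis using jk by (simp add: sum_d3f_offdiag_right)
  next
    case False then show ?thesis by (simp add: sum_d3f_offdiag_left)
  qed
  have B: "(\<Sum>m\<in>UNIV. d3f i k m * d3f j l m) =
      (if i \<noteq> k then 2 * d3f j l (min i k) else 2 * d3f i k (min j l))"
  proof (cases "i = k")
    case True then show ?thesis using jl by (simp add: sum_d3f_offdiag_right)
  next
    case False then show ?thesis by (simp add: sum_d3f_offdiag_left)
  qed
  consider "i = l" | "i \<noteq> l" "j = k" | "i \<noteq> l" "j \<noteq> k" "i = k"
    | "i \<noteq> l" "j \<noteq> k" "i \<noteq> k" "j = l" | "i \<noteq> l" "j \<noteq> k" "i \<noteq> k" "j \<noteq> l"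
    by blast
  then show ?thesis unfolding curv_rate_split A B using ij kl jk jl
    by cases (simp_all add: d3f_offdiag d3f_diag, auto simp: min_def)
qed

lemma curv_rate_sectional:
  fixes i j :: "'n::{finite,linorder}"
  assumes "i < j"
  shows "curv_rate i j i j = - 8 - 4 * (real CARD('n) - real (pos j))"
proof -
  have ij: "i \<noteq> j" using assms by simp
  have 1: "(\<Sum>m\<in>UNIV. d3f i j m * d3f j i m) = 4"
    by (subst sum_d3f_offdiag_left[OF ij]) (simp add: d3f_offdiag min.commute ij[symmetric])
  have "(\<Sum>m\<in>UNIV. d3f i i m * d3f j j m) = (\<Sum>m\<in>UNIV. (if m = j then 12 else 0) + (if j < m then 4 else 0))"
    using assms by (intro sum.cong refl) (auto simp: d3f_diag)
  also have "\<dots> = 12 + 4 * real (card {m. j < m})"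
    by (simp add: sum.distrib sum.If_cases)
  also have "\<dots> = 12 + 4 * (real CARD('n) - real (pos j))"
    using pos_le_card[of j] by (simp add: card_greater of_nat_diff)
  finally have 2: "(\<Sum>m\<in>UNIV. d3f i i m * d3f j j m) = 12 + 4 * (real CARD('n) - real (pos j))" .
  show ?thesis unfolding curv_rate_split 1 2 by simp
qed


section \<open>Calculus on the space-time domain [0,T) x U\<close>

text \<open>On
  ST = [0,T) x U these derivatives are unique, so we can name them: Dst F is the chosen
  derivative, dt and dx a its time and spatial components.  The key result of the section is
  that time and space derivatives commute (dt_dx_commute), proved with the fundamental theorem
  of calculus in time and differentiation under the integral sign.\<close>

lemma Ck_cong: "(\<And>x. x \<in> S \<Longrightarrow> F x = H x) \<Longrightarrow> Ck k S F \<Longrightarrow> Ck k S H"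
proof (induction k arbitrary: F H)
  case 0
  then show ?case using continuous_on_cong by (metis Ck.simps(1))
next
  case (Suc k)
  from Suc.prems(2) obtain F' where F': "\<forall>x\<in>S. (F has_derivative F' x) (at x within S)"
    "\<forall>v. Ck k S (\<lambda>x. F' x v)" by auto
  have "\<forall>x\<in>S. (H has_derivative F' x) (at x within S)"
  proof
    fix x assume x: "x \<in> S"
    show "(H has_derivative F' x) (at x within S)"
      by (rule has_derivative_transform_within[OF F'(1)[rule_format, OF x] zero_less_one x])
         (use Suc.prems(1) in auto)
  qed
  then show ?case using F'(2) by auto
qed

locale strip =
  fixes T :: real and U :: "(real^'n::finite) set"
  assumes T_pos: "T > 0" and U_open: "open U"
begin

abbreviation ST :: "(real \<times> (real^'n)) set" where "ST \<equiv> {0..<T} \<times> U"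

text \<open>Every point of ST can be approached from inside ST along each coordinate direction,
  so derivatives within ST are unique.\<close>

lemma ST_approachable:
  assumes z: "z \<in> ST" and i: "i \<in> Basis" and e: "e > 0"
  shows "\<exists>d. 0 < \<bar>d\<bar> \<and> \<bar>d\<bar> < e \<and> z + d *\<^sub>R i \<in> ST"
proof -
  obtain t x where zt: "z = (t, x)" and t: "0 \<le> t" "t < T" and x: "x \<in> U" using z by auto
  from i consider "i = (1, 0)" | v where "v \<in> Basis" "i = (0, v)"
    by (auto simp: Basis_prod_def)
  then show ?thesis
  proof cases
    case 1
    let ?d = "min e (T - t) / 2"
    have d1: "?d \<le> (T - t) / 2" "?d \<le> e / 2" by auto
    have "0 < ?d" using t e by (auto simp: min_def)
    moreover have "?d < e" using d1 e by linarith
    moreover have "(T - t) / 2 < T - t" using t by simp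
    then have "t + ?d < T" using d1 t by linarith
    then have "z + ?d *\<^sub>R i \<in> ST" using t x \<open>0 < ?d\<close> by (auto simp: zt 1)
    ultimately have "0 < ?d" "?d < e" "z + ?d *\<^sub>R i \<in> ST" by auto
    then show ?thesis by (intro exI[of _ ?d]) auto
  next
    case (2 v)
    obtain r where r: "r > 0" "ball x r \<subseteq> U" using U_open x open_contains_ball by blast
    let ?d = "min e r / 2"
    have nv: "norm v = 1" using 2 by (simp add: norm_Basis)
    have "x + ?d *\<^sub>R v \<in> ball x r" using r e nv by (auto simp: dist_norm min_def)
    then have "z + ?d *\<^sub>R i \<in> ST" using r t by (auto simp: zt 2)
    moreover have "0 < ?d" "?d < e" using r e by (auto simp: min_def)
    ultimately show ?thesis by (intro exI[of _ ?d]) auto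
  qed
qed

lemma ST_derivative_unique:
  assumes "z \<in> ST" "(F has_derivative F1) (at z within ST)" "(F has_derivative F2) (at z within ST)"
  shows "F1 = F2"
  by (rule frechet_derivative_unique_within[OF assms(2,3)]) (use ST_approachable assms(1) in blast)

lemma smooth_on_derivative_exists:
  assumes "smooth_on ST F"
  shows "\<exists>F'. (\<forall>z\<in>ST. (F has_derivative F' z) (at z within ST)) \<and> (\<forall>v. smooth_on ST (\<lambda>z. F' z v))"
proof -
  from assms have "Ck (Suc 0) ST F" unfolding smooth_on_def by blast
  then obtain F0 where F0: "\<forall>z\<in>ST. (F has_derivative F0 z) (at z within ST)" by auto
  have "Ck k ST (\<lambda>z. F0 z v)" for k v
  proof -
    from assms have "Ck (Suc k) ST F" unfolding smooth_on_def by blast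
    then obtain Fk where Fk: "\<forall>z\<in>ST. (F has_derivative Fk z) (at z within ST)" "\<forall>v. Ck k ST (\<lambda>z. Fk z v)"
      by auto
    have "\<And>z. z \<in> ST \<Longrightarrow> Fk z v = F0 z v"
      using ST_derivative_unique Fk(1) F0 by metis
    then show ?thesis using Ck_cong[of ST "\<lambda>z. Fk z v" "\<lambda>z. F0 z v" k] Fk(2) by blast
  qed
  then show ?thesis using F0 unfolding smooth_on_def by blast
qed

definition Dst :: "(real \<times> (real^'n) \<Rightarrow> real) \<Rightarrow> real \<times> (real^'n) \<Rightarrow> real \<times> (real^'n) \<Rightarrow> real" where
  "Dst F = (SOME F'. (\<forall>z\<in>ST. (F has_derivative F' z) (at z within ST)) \<and> (\<forall>v. smooth_on ST (\<lambda>z. F' z v)))"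

lemma Dst_spec:
  assumes "smooth_on ST F"
  shows "\<And>z. z \<in> ST \<Longrightarrow> (F has_derivative Dst F z) (at z within ST)" "\<And>v. smooth_on ST (\<lambda>z. Dst F z v)"
  using someI_ex[OF smooth_on_derivative_exists[OF assms]] unfolding Dst_def[symmetric] by auto

definition dt :: "(real \<times> (real^'n) \<Rightarrow> real) \<Rightarrow> real \<times> (real^'n) \<Rightarrow> real" where
  "dt F z = Dst F z (1, 0)"

definition dx :: "'n \<Rightarrow> (real \<times> (real^'n) \<Rightarrow> real) \<Rightarrow> real \<times> (real^'n) \<Rightarrow> real" where
  "dx a F z = Dst F z (0, axis a 1)"

lemma smooth_dt: "smooth_on ST F \<Longrightarrow> smooth_on ST (dt F)"
  unfolding dt_def[abs_def] using Dst_spec(2) by blast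

lemma smooth_dx: "smooth_on ST F \<Longrightarrow> smooth_on ST (dx a F)"
  unfolding dx_def[abs_def] using Dst_spec(2) by blast

lemma smooth_on_continuous: "smooth_on ST F \<Longrightarrow> continuous_on ST F"
  unfolding smooth_on_def by (metis Ck.simps(1))

lemma Dst_chain:
  assumes F: "smooth_on ST F" and p: "(p has_derivative (\<lambda>s. s *\<^sub>R v)) (at s0 within S)"
    and pS: "p ` S \<subseteq> ST" and p0: "p s0 \<in> ST"
  shows "((\<lambda>s. F (p s)) has_real_derivative Dst F (p s0) v) (at s0 within S)"
proof -
  have Fd: "(F has_derivative Dst F (p s0)) (at (p s0) within p ` S)"
    using Dst_spec(1)[OF F p0] pS by (rule has_derivative_subset)
  have "((\<lambda>s. F (p s)) has_derivative (\<lambda>s. Dst F (p s0) (s *\<^sub>R v))) (at s0 within S)"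
    using diff_chain_within[OF p Fd] by (simp add: o_def)
  moreover have "(\<lambda>s. Dst F (p s0) (s *\<^sub>R v)) = (*) (Dst F (p s0) v)"
    using linear_scale[OF has_derivative_linear[OF Dst_spec(1)[OF F p0]]] by (auto simp: mult.commute)
  ultimately show ?thesis by (simp add: has_field_derivative_def)
qed

lemma dx_along_axis:
  assumes F: "smooth_on ST F" and t: "t \<in> {0..<T}" and x: "x \<in> U"
  shows "((\<lambda>s. F (t, x + s *\<^sub>R axis a 1)) has_real_derivative dx a F (t, x)) (at 0)"
proof -
  let ?W = "(\<lambda>s::real. x + s *\<^sub>R axis a 1) -` U"
  have W: "open ?W" "0 \<in> ?W"
    using x by (auto intro!: open_vimage[OF U_open] continuous_intros)
  let ?p = "\<lambda>s::real. (t, x + s *\<^sub>R axis a 1)"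
  have "(?p has_derivative (\<lambda>s. s *\<^sub>R (0, axis a 1))) (at 0 within ?W)"
    by (auto intro!: derivative_eq_intros simp: scaleR_prod_def)
  moreover have "?p ` ?W \<subseteq> ST" "?p 0 \<in> ST" using t x by auto
  ultimately have "((\<lambda>s. F (?p s)) has_real_derivative Dst F (?p 0) (0, axis a 1)) (at 0 within ?W)"
    by (rule Dst_chain[OF F])
  then have "((\<lambda>s. F (t, x + s *\<^sub>R axis a 1)) has_real_derivative dx a F (t, x)) (at 0 within ?W)"
    by (simp add: dx_def)
  then show ?thesis using at_within_open[OF W(2,1)] by simp
qed

lemma pd_eq_dx:
  assumes F: "smooth_on ST F" and t: "t \<in> {0..<T}" and x: "x \<in> U"
  shows "pd a (\<lambda>y. F (t, y)) x = dx a F (t, x)"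
  by (rule pd_eqI_real[OF dx_along_axis[OF assms]])

lemma dt_has_derivative:
  assumes F: "smooth_on ST F" and t: "t \<in> {0..<T}" and x: "x \<in> U"
  shows "((\<lambda>s. F (s, x)) has_real_derivative dt F (t, x)) (at t within {0..<T})"
proof -
  have "((\<lambda>s::real. (s, x)) has_derivative (\<lambda>s. s *\<^sub>R (1, 0))) (at t within {0..<T})"
    by (auto intro!: derivative_eq_intros simp: scaleR_prod_def)
  from Dst_chain[OF F this] t x show ?thesis by (auto simp: dt_def)
qed

lemma derivative_unique_Ico:
  assumes "(f has_real_derivative D1) (at t within {0..<T})" "(f has_real_derivative D2) (at t within {0..<T})"
    and t: "t \<in> {0..<T}"
  shows "D1 = D2"
proof -
  have "(*) D1 = (*) D2"
  proof (rule frechet_derivative_unique_within[OF assms(1,2)[unfolded has_field_derivative_def]])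
    fix i :: real and e :: real assume i: "i \<in> Basis" and e: "0 < e"
    then have i1: "i = 1" by simp
    let ?d = "min e (T - t) / 2"
    have d1: "?d \<le> (T - t) / 2" "?d \<le> e / 2" by auto
    have "(T - t) / 2 < T - t" using t by simp
    then have "t + ?d < T" using d1 t by linarith
    moreover have "0 < ?d" using t e by (auto simp: min_def)
    moreover have "?d < e" using d1 e by linarith
    ultimately show "\<exists>d. 0 < \<bar>d\<bar> \<and> \<bar>d\<bar> < e \<and> t + d *\<^sub>R i \<in> {0..<T}"
      using t by (intro exI[of _ ?d]) (auto simp: i1)
  qed
  then show ?thesis by (metis mult.right_neutral)
qed

lemma time_ftc:
  assumes F: "smooth_on ST F" and y: "y \<in> U" and t: "t \<in> {0..<T}"
  shows "F (t, y) - F (0, y) = integral {0..t} (\<lambda>\<tau>. dt F (\<tau>, y))"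
proof -
  have "((\<lambda>\<tau>. dt F (\<tau>, y)) has_integral (F (t, y) - F (0, y))) {0..t}"
  proof (rule fundamental_theorem_of_calculus)
    show "0 \<le> t" using t by simp
    fix \<tau> assume "\<tau> \<in> {0..t}"
    then have "((\<lambda>\<sigma>. F (\<sigma>, y)) has_real_derivative dt F (\<tau>, y)) (at \<tau> within {0..t})"
      using t by (intro has_field_derivative_subset[OF dt_has_derivative[OF F _ y]]) auto
    then show "((\<lambda>\<sigma>. F (\<sigma>, y)) has_vector_derivative dt F (\<tau>, y)) (at \<tau> within {0..t})"
      by (simp add: has_real_derivative_iff_has_vector_derivative)
  qed
  then show ?thesis by (simp add: integral_unique)
qed

text \<open>Differentiation under the time integral along a coordinate line in U (Leibniz rule);
  the integrand dt F is continuously differentiable in space.\<close>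

lemma leibniz_dx:
  assumes F: "smooth_on ST F" and t: "t \<in> {0..<T}"
    and I: "open I" "convex I" "0 \<in> I" and inU: "\<And>s. s \<in> I \<Longrightarrow> x + s *\<^sub>R axis a 1 \<in> U"
  shows "((\<lambda>s. integral {0..t} (\<lambda>\<tau>. dt F (\<tau>, x + s *\<^sub>R axis a 1))) has_real_derivative
      integral {0..t} (\<lambda>\<tau>. dx a (dt F) (\<tau>, x))) (at 0 within I)"
proof -
  let ?e = "axis a 1 :: real^'n"
  have dtF: "smooth_on ST (dt F)" by (rule smooth_dt[OF F])
  have sub: "(\<lambda>(s, \<tau>). (\<tau>, x + s *\<^sub>R ?e)) ` (I \<times> cbox 0 t) \<subseteq> ST"
    using t inU by (auto simp: cbox_interval)
  have "((\<lambda>s. integral (cbox 0 t) (\<lambda>\<tau>. dt F (\<tau>, x + s *\<^sub>R ?e))) has_real_derivative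
      integral (cbox 0 t) (\<lambda>\<tau>. dx a (dt F) (\<tau>, x + 0 *\<^sub>R ?e))) (at 0 within I)"
  proof (rule leibniz_rule_field_derivative[where fx = "\<lambda>s \<tau>. dx a (dt F) (\<tau>, x + s *\<^sub>R ?e)"])
    fix s \<tau> assume s: "s \<in> I" and \<tau>: "\<tau> \<in> cbox 0 t"
    have "((\<lambda>u. dt F (\<tau>, (x + s *\<^sub>R ?e) + u *\<^sub>R ?e)) has_real_derivative dx a (dt F) (\<tau>, x + s *\<^sub>R ?e)) (at 0)"
      using \<tau> t by (intro dx_along_axis[OF dtF _ inU[OF s]]) (auto simp: cbox_interval)
    then have "((\<lambda>u. dt F (\<tau>, x + u *\<^sub>R ?e)) has_real_derivative dx a (dt F) (\<tau>, x + s *\<^sub>R ?e)) (at (0 + s))"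
      by (subst DERIV_shift) (simp add: scaleR_add_left algebra_simps)
    then show "((\<lambda>s. dt F (\<tau>, x + s *\<^sub>R ?e)) has_real_derivative dx a (dt F) (\<tau>, x + s *\<^sub>R ?e)) (at s within I)"
      by (simp add: has_field_derivative_at_within)
  next
    fix s assume s: "s \<in> I"
    have "continuous_on {0..t} (\<lambda>\<tau>. dt F (\<tau>, x + s *\<^sub>R ?e))"
      by (rule continuous_on_compose2[OF smooth_on_continuous[OF dtF]])
         (use t inU[OF s] in \<open>auto intro!: continuous_intros\<close>)
    then show "(\<lambda>\<tau>. dt F (\<tau>, x + s *\<^sub>R ?e)) integrable_on cbox 0 t"
      by (simp add: cbox_interval integrable_continuous_interval)
  next
    have "continuous_on (I \<times> cbox 0 t) (\<lambda>z. dx a (dt F) ((\<lambda>(s, \<tau>). (\<tau>, x + s *\<^sub>R ?e)) z))"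
      by (rule continuous_on_compose2[OF smooth_on_continuous[OF smooth_dx[OF dtF]] _ sub])
         (auto intro!: continuous_intros simp: split_beta)
    then show "continuous_on (I \<times> cbox 0 t) (\<lambda>(s, \<tau>). dx a (dt F) (\<tau>, x + s *\<^sub>R ?e))"
      by (simp add: split_beta)
  qed (use I in auto)
  then show ?thesis by (simp add: cbox_interval)
qed

lemma dx_time_increment:
  assumes F: "smooth_on ST F" and x: "x \<in> U" and t: "t \<in> {0..<T}"
  shows "dx a F (t, x) - dx a F (0, x) = integral {0..t} (\<lambda>\<tau>. dx a (dt F) (\<tau>, x))"
proof -
  obtain r where r: "r > 0" "cball x r \<subseteq> U" using U_open x open_contains_cball by blast
  define I where "I = {-r<..<r}"
  have I: "open I" "convex I" "0 \<in> I" using r by (auto simp: I_def)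
  have inU: "x + s *\<^sub>R axis a 1 \<in> U" if "s \<in> I" for s
  proof -
    have "dist x (x + s *\<^sub>R axis a 1) \<le> r" using that by (auto simp: I_def dist_norm)
    then show ?thesis using r by auto
  qed
  have T0: "0 \<in> {0..<T}" using T_pos by simp
  have "((\<lambda>s. F (t, x + s *\<^sub>R axis a 1) - F (0, x + s *\<^sub>R axis a 1)) has_real_derivative
      dx a F (t, x) - dx a F (0, x)) (at 0)"
    by (intro DERIV_diff dx_along_axis[OF F] t x T0)
  moreover have "((\<lambda>s. F (t, x + s *\<^sub>R axis a 1) - F (0, x + s *\<^sub>R axis a 1)) has_real_derivative
      integral {0..t} (\<lambda>\<tau>. dx a (dt F) (\<tau>, x))) (at 0)"
  proof (rule has_field_derivative_transform_within_open[OF _ I(1,3)])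
    show "((\<lambda>s. integral {0..t} (\<lambda>\<tau>. dt F (\<tau>, x + s *\<^sub>R axis a 1))) has_real_derivative
        integral {0..t} (\<lambda>\<tau>. dx a (dt F) (\<tau>, x))) (at 0)"
      using leibniz_dx[OF F t I inU] at_within_open[OF I(3,1)] by simp
  qed (use time_ftc[OF F inU t] in simp)
  ultimately show ?thesis by (rule DERIV_unique)
qed

text \<open>Time and space derivatives commute: this is what lets us differentiate the spatial jets
  of the metric in time.\<close>

lemma dt_dx_commute:
  assumes F: "smooth_on ST F" and x: "x \<in> U"
  shows "((\<lambda>t. dx a F (t, x)) has_real_derivative dx a (dt F) (0, x)) (at 0 within {0..<T})"
proof -
  define t1 where "t1 = T / 2"
  have t1: "0 < t1" "t1 < T" using T_pos by (auto simp: t1_def)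
  have cont: "continuous_on {0..t1} (\<lambda>\<tau>. dx a (dt F) (\<tau>, x))"
    by (rule continuous_on_compose2[OF smooth_on_continuous[OF smooth_dx[OF smooth_dt[OF F]]]])
       (use t1 x in \<open>auto intro!: continuous_intros\<close>)
  have "((\<lambda>t. dx a F (0, x) + integral {0..t} (\<lambda>\<tau>. dx a (dt F) (\<tau>, x))) has_real_derivative
      dx a (dt F) (0, x)) (at 0 within {0..t1})"
    using integral_has_real_derivative[OF cont, of 0] t1 by (auto intro!: derivative_eq_intros)
  then have "((\<lambda>t. dx a F (t, x)) has_real_derivative dx a (dt F) (0, x)) (at 0 within {0..t1})"
  proof (rule has_field_derivative_transform_within[OF _ t1(1)])
    fix y assume "y \<in> {0..t1}"
    then have "y \<in> {0..<T}" using t1 by simp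
    then show "dx a F (0, x) + integral {0..y} (\<lambda>\<tau>. dx a (dt F) (\<tau>, x)) = dx a F (y, x)"
      using dx_time_increment[OF F x, of y a] by linarith
  qed (use t1 in simp)
  moreover have "at 0 within {0..t1} = at (0::real) within {0..<T}"
    by (rule at_within_nhd[where S="{-1<..<t1}"]) (use t1 in auto)
  ultimately show ?thesis by simp
qed

end

section \<open>Curvature at a point in terms of the jets of the metric\<close>

text \<open>At a point, the curvature tensor only depends on the metric G0, its inverse IV, its first
  derivatives P a k l = d_a G_kl and its second derivatives P2 b a k l = d_b d_a G_kl.\<close>

definition bracket_jet :: "('n \<Rightarrow> 'n \<Rightarrow> 'n \<Rightarrow> real) \<Rightarrow> 'n \<Rightarrow> 'n \<Rightarrow> 'n \<Rightarrow> real" where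
  "bracket_jet P j k q = P j k q + P k j q - P q j k"

definition dbracket_jet :: "('n \<Rightarrow> 'n \<Rightarrow> 'n \<Rightarrow> 'n \<Rightarrow> real) \<Rightarrow> 'n \<Rightarrow> 'n \<Rightarrow> 'n \<Rightarrow> 'n \<Rightarrow> real" where
  "dbracket_jet P2 b j k q = P2 b j k q + P2 b k j q - P2 b q j k"

definition dinv_jet :: "real^'n::finite^'n \<Rightarrow> ('n \<Rightarrow> 'n \<Rightarrow> 'n \<Rightarrow> real) \<Rightarrow> 'n \<Rightarrow> 'n \<Rightarrow> 'n \<Rightarrow> real" where
  "dinv_jet IV P b m p = - (\<Sum>q\<in>UNIV. \<Sum>r\<in>UNIV. IV $ m $ r * P b r q * IV $ q $ p)"

definition Gam_jet :: "real^'n::finite^'n \<Rightarrow> ('n \<Rightarrow> 'n \<Rightarrow> 'n \<Rightarrow> real) \<Rightarrow> 'n \<Rightarrow> 'n \<Rightarrow> 'n \<Rightarrow> real" where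
  "Gam_jet IV P m j k = 1/2 * (\<Sum>q\<in>UNIV. IV $ m $ q * bracket_jet P j k q)"

definition dGam_jet :: "real^'n::finite^'n \<Rightarrow> ('n \<Rightarrow> 'n \<Rightarrow> 'n \<Rightarrow> real) \<Rightarrow> ('n \<Rightarrow> 'n \<Rightarrow> 'n \<Rightarrow> 'n \<Rightarrow> real)
    \<Rightarrow> 'n \<Rightarrow> 'n \<Rightarrow> 'n \<Rightarrow> 'n \<Rightarrow> real" where
  "dGam_jet IV P P2 b m j k =
     1/2 * (\<Sum>q\<in>UNIV. dinv_jet IV P b m q * bracket_jet P j k q + IV $ m $ q * dbracket_jet P2 b j k q)"

definition Rup_jet :: "real^'n::finite^'n \<Rightarrow> ('n \<Rightarrow> 'n \<Rightarrow> 'n \<Rightarrow> real) \<Rightarrow> ('n \<Rightarrow> 'n \<Rightarrow> 'n \<Rightarrow> 'n \<Rightarrow> real)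
    \<Rightarrow> 'n \<Rightarrow> 'n \<Rightarrow> 'n \<Rightarrow> 'n \<Rightarrow> real" where
  "Rup_jet IV P P2 i j k m = dGam_jet IV P P2 i m j k - dGam_jet IV P P2 j m i k
     + (\<Sum>p\<in>UNIV. Gam_jet IV P p j k * Gam_jet IV P m i p - Gam_jet IV P p i k * Gam_jet IV P m j p)"

definition Rm_jet :: "real^'n::finite^'n \<Rightarrow> real^'n^'n \<Rightarrow> ('n \<Rightarrow> 'n \<Rightarrow> 'n \<Rightarrow> real)
    \<Rightarrow> ('n \<Rightarrow> 'n \<Rightarrow> 'n \<Rightarrow> 'n \<Rightarrow> real) \<Rightarrow> 'n \<Rightarrow> 'n \<Rightarrow> 'n \<Rightarrow> 'n \<Rightarrow> real" where
  "Rm_jet G0 IV P P2 i j k l = (\<Sum>m\<in>UNIV. G0 $ l $ m * Rup_jet IV P P2 i j k m)"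

lemma pd_Gam_at_0:
  fixes G :: "real^'n::finite \<Rightarrow> real^'n^'n"
  assumes V: "open V" "0 \<in> V"
    and nz: "\<And>y. y \<in> V \<Longrightarrow> det (G y) \<noteq> 0"
    and d1: "\<And>y a k l. y \<in> V \<Longrightarrow> ((\<lambda>s. G (y + s *\<^sub>R axis a 1) $ k $ l) has_real_derivative PP a k l y) (at 0)"
    and d2: "\<And>b a k l. ((\<lambda>s. PP a k l (s *\<^sub>R axis b 1)) has_real_derivative P2 b a k l) (at 0)"
  shows "pd b (\<lambda>y. Gam G y m j k) 0 = dGam_jet (matrix_inv (G 0)) (\<lambda>a k l. PP a k l 0) P2 b m j k"
proof -
  let ?IV = "matrix_inv (G 0)" and ?P = "\<lambda>a k l. PP a k l 0"
  let ?H = "\<lambda>y. 1/2 * (\<Sum>q\<in>UNIV. matrix_inv (G y) $ m $ q * (PP j k q y + PP k j q y - PP q j k y))"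
  have "pd b (\<lambda>y. Gam G y m j k) 0 = pd b ?H 0"
    by (rule pd_local[OF V]) (simp add: Gam_def pd_eqI_real[OF d1])
  also have "\<dots> = dGam_jet ?IV ?P P2 b m j k"
  proof (rule pd_eqI_real)
    let ?W = "(\<lambda>s::real. s *\<^sub>R axis b 1) -` V"
    have W: "open ?W" "0 \<in> ?W"
      using V by (auto intro!: open_vimage[OF V(1)] continuous_intros)
    have inv_d: "((\<lambda>s. matrix_inv (G (s *\<^sub>R axis b 1)) $ m $ q) has_real_derivative dinv_jet ?IV ?P b m q) (at 0)"
      for q
      using matrix_inv_has_derivative[OF W, of "\<lambda>s. G (s *\<^sub>R axis b 1)"] nz d1[OF V(2)]
      by (simp add: dinv_jet_def)
    have "((\<lambda>s. 1/2 * (\<Sum>q\<in>UNIV. matrix_inv (G (s *\<^sub>R axis b 1)) $ m $ q *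
          (PP j k q (s *\<^sub>R axis b 1) + PP k j q (s *\<^sub>R axis b 1) - PP q j k (s *\<^sub>R axis b 1))))
        has_real_derivative 1/2 * (\<Sum>q\<in>UNIV. dinv_jet ?IV ?P b m q * bracket_jet ?P j k q
          + ?IV $ m $ q * dbracket_jet P2 b j k q)) (at 0)"
    proof (intro DERIV_cmult DERIV_sum)
      fix q
      show "((\<lambda>s. matrix_inv (G (s *\<^sub>R axis b 1)) $ m $ q *
          (PP j k q (s *\<^sub>R axis b 1) + PP k j q (s *\<^sub>R axis b 1) - PP q j k (s *\<^sub>R axis b 1)))
        has_real_derivative dinv_jet ?IV ?P b m q * bracket_jet ?P j k q
          + ?IV $ m $ q * dbracket_jet P2 b j k q) (at 0)"
        using DERIV_mult[OF inv_d[of q] DERIV_diff[OF DERIV_add[OF d2 d2] d2]]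
        by (simp add: bracket_jet_def dbracket_jet_def algebra_simps)
    qed
    then show "((\<lambda>s. ?H (0 + s *\<^sub>R axis b 1)) has_real_derivative dGam_jet ?IV ?P P2 b m j k) (at 0)"
      by (simp add: dGam_jet_def)
  qed
  finally show ?thesis .
qed

lemma Rm_at_0_jet:
  fixes G :: "real^'n::finite \<Rightarrow> real^'n^'n"
  assumes V: "open V" "0 \<in> V"
    and nz: "\<And>y. y \<in> V \<Longrightarrow> det (G y) \<noteq> 0"
    and d1: "\<And>y a k l. y \<in> V \<Longrightarrow> ((\<lambda>s. G (y + s *\<^sub>R axis a 1) $ k $ l) has_real_derivative PP a k l y) (at 0)"
    and d2: "\<And>b a k l. ((\<lambda>s. PP a k l (s *\<^sub>R axis b 1)) has_real_derivative P2 b a k l) (at 0)"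
  shows "Rm G i j k l 0 = Rm_jet (G 0) (matrix_inv (G 0)) (\<lambda>a k l. PP a k l 0) P2 i j k l"
proof -
  have "Gam G 0 m j k = Gam_jet (matrix_inv (G 0)) (\<lambda>a k l. PP a k l 0) m j k" for m j k
    by (simp add: Gam_def Gam_jet_def bracket_jet_def pd_eqI_real[OF d1[OF V(2)]])
  then show ?thesis
    unfolding Rm_def Rm_jet_def Rup_def Rup_jet_def by (simp add: pd_Gam_at_0[OF assms])
qed

text \<open>A path of jets through the flat jet: at t = 0 the metric and its inverse are the
  identity and all first and second derivatives vanish.  Along such a path only the second
  derivatives contribute to the rate of change of the curvature, linearly.\<close>

locale flat_jet_path =
  fixes G IV :: "real \<Rightarrow> real^'n::finite^'n" and P :: "real \<Rightarrow> 'n \<Rightarrow> 'n \<Rightarrow> 'n \<Rightarrow> real"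
    and P2 :: "real \<Rightarrow> 'n \<Rightarrow> 'n \<Rightarrow> 'n \<Rightarrow> 'n \<Rightarrow> real" and X :: "real set"
    and Gd IVd :: "'n \<Rightarrow> 'n \<Rightarrow> real" and Pd :: "'n \<Rightarrow> 'n \<Rightarrow> 'n \<Rightarrow> real"
    and P2d :: "'n \<Rightarrow> 'n \<Rightarrow> 'n \<Rightarrow> 'n \<Rightarrow> real"
  assumes G: "\<And>a b. ((\<lambda>t. G t $ a $ b) has_real_derivative Gd a b) (at 0 within X)"
    and IV: "\<And>a b. ((\<lambda>t. IV t $ a $ b) has_real_derivative IVd a b) (at 0 within X)"
    and P: "\<And>a k l. ((\<lambda>t. P t a k l) has_real_derivative Pd a k l) (at 0 within X)"
    and P2: "\<And>b a k l. ((\<lambda>t. P2 t b a k l) has_real_derivative P2d b a k l) (at 0 within X)"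
    and G0: "G 0 = mat 1" and IV0: "IV 0 = mat 1" and P0: "\<And>a k l. P 0 a k l = 0"
    and P20: "\<And>b a k l. P2 0 b a k l = 0"
begin

lemma Gam_jet_0: "Gam_jet A (P 0) m j k = 0"
  by (simp add: Gam_jet_def bracket_jet_def P0)

lemma dinv_jet_0: "dinv_jet A (P 0) b m q = 0"
  by (simp add: dinv_jet_def P0)

lemma dGam_jet_0: "dGam_jet A (P 0) (P2 0) b m j k = 0"
  by (simp add: dGam_jet_def dinv_jet_0 bracket_jet_def dbracket_jet_def P0 P20)

lemma Rup_jet_0: "Rup_jet A (P 0) (P2 0) i j k m = 0"
  by (simp add: Rup_jet_def dGam_jet_0 Gam_jet_0)

lemma IV_differentiable: "(\<lambda>t. IV t $ a $ b) differentiable (at 0 within X)"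
  using IV real_differentiable_def by blast

lemma P_differentiable: "(\<lambda>t. P t a k l) differentiable (at 0 within X)"
  using P real_differentiable_def by blast

lemma dinv_jet_differentiable: "(\<lambda>t. dinv_jet (IV t) (P t) b m q) differentiable (at 0 within X)"
  unfolding dinv_jet_def
  by (intro differentiable_minus differentiable_sum ballI differentiable_mult IV_differentiable
      P_differentiable) auto

lemma Gam_jet_differentiable: "(\<lambda>t. Gam_jet (IV t) (P t) m j k) differentiable (at 0 within X)"
  unfolding Gam_jet_def bracket_jet_def
  by (intro differentiable_sum ballI differentiable_mult differentiable_add differentiable_diff
      differentiable_const IV_differentiable P_differentiable) auto

lemma Gam_jet_product_deriv:
  "((\<lambda>t. Gam_jet (IV t) (P t) a b c * Gam_jet (IV t) (P t) d e f) has_real_derivative 0) (at 0 within X)"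
proof -
  obtain D1 where D1: "((\<lambda>t. Gam_jet (IV t) (P t) a b c) has_real_derivative D1) (at 0 within X)"
    using Gam_jet_differentiable real_differentiable_def by blast
  obtain D2 where D2: "((\<lambda>t. Gam_jet (IV t) (P t) d e f) has_real_derivative D2) (at 0 within X)"
    using Gam_jet_differentiable real_differentiable_def by blast
  show ?thesis using DERIV_mult[OF D1 D2] by (simp add: Gam_jet_0)
qed

lemma dGam_jet_deriv:
  "((\<lambda>t. dGam_jet (IV t) (P t) (P2 t) b m j k) has_real_derivative (1/2) * dbracket_jet P2d b j k m)
     (at 0 within X)"
proof -
  have term_deriv: "((\<lambda>t. dinv_jet (IV t) (P t) b m q * bracket_jet (P t) j k q + IV t $ m $ q * dbracket_jet (P2 t) b j k q)
      has_real_derivative dbracket_jet P2d b j k q * (if m = q then 1 else 0)) (at 0 within X)" for q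
  proof -
    obtain D where D: "((\<lambda>t. dinv_jet (IV t) (P t) b m q) has_real_derivative D) (at 0 within X)"
      using dinv_jet_differentiable real_differentiable_def by blast
    have B: "((\<lambda>t. bracket_jet (P t) j k q) has_real_derivative bracket_jet Pd j k q) (at 0 within X)"
      unfolding bracket_jet_def by (intro DERIV_add DERIV_diff P)
    have dB: "((\<lambda>t. dbracket_jet (P2 t) b j k q) has_real_derivative dbracket_jet P2d b j k q) (at 0 within X)"
      unfolding dbracket_jet_def by (intro DERIV_add DERIV_diff P2)
    show ?thesis using DERIV_add[OF DERIV_mult[OF D B] DERIV_mult[OF IV[of m q] dB]]
      by (simp add: dinv_jet_0 bracket_jet_def dbracket_jet_def P0 P20 IV0 mat_def)
  qed
  then have "((\<lambda>t. \<Sum>q\<in>UNIV. dinv_jet (IV t) (P t) b m q * bracket_jet (P t) j k q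
      + IV t $ m $ q * dbracket_jet (P2 t) b j k q)
      has_real_derivative (\<Sum>q\<in>UNIV. dbracket_jet P2d b j k q * (if m = q then 1 else 0))) (at 0 within X)"
    by (intro DERIV_sum)
  moreover have "(\<Sum>q\<in>UNIV. dbracket_jet P2d b j k q * (if m = q then 1 else 0)) = dbracket_jet P2d b j k m"
    by (simp add: if_distrib cong: if_cong)
  ultimately show ?thesis
    unfolding dGam_jet_def by (intro DERIV_cmult) simp
qed

lemma Rup_jet_deriv:
  "((\<lambda>t. Rup_jet (IV t) (P t) (P2 t) i j k m) has_real_derivative
      (1/2) * dbracket_jet P2d i j k m - (1/2) * dbracket_jet P2d j i k m) (at 0 within X)"
proof -
  have "((\<lambda>t. \<Sum>p\<in>UNIV. Gam_jet (IV t) (P t) p j k * Gam_jet (IV t) (P t) m i p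
      - Gam_jet (IV t) (P t) p i k * Gam_jet (IV t) (P t) m j p) has_real_derivative (\<Sum>p\<in>(UNIV::'n set). 0 - 0))
      (at 0 within X)"
    by (intro DERIV_sum DERIV_diff Gam_jet_product_deriv)
  from DERIV_add[OF DERIV_diff[OF dGam_jet_deriv dGam_jet_deriv] this] show ?thesis
    unfolding Rup_jet_def by simp
qed

lemma Rm_jet_deriv:
  "((\<lambda>t. Rm_jet (G t) (IV t) (P t) (P2 t) i j k l) has_real_derivative
      (1/2) * (dbracket_jet P2d i j k l - dbracket_jet P2d j i k l)) (at 0 within X)"
proof -
  have "((\<lambda>t. G t $ l $ m * Rup_jet (IV t) (P t) (P2 t) i j k m) has_real_derivative
      ((1/2) * dbracket_jet P2d i j k m - (1/2) * dbracket_jet P2d j i k m) * (if l = m then 1 else 0))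
      (at 0 within X)" for m
    using DERIV_mult[OF G Rup_jet_deriv] by (simp add: Rup_jet_0 G0 mat_def)
  then have "((\<lambda>t. \<Sum>m\<in>UNIV. G t $ l $ m * Rup_jet (IV t) (P t) (P2 t) i j k m) has_real_derivative
      (\<Sum>m\<in>UNIV. ((1/2) * dbracket_jet P2d i j k m - (1/2) * dbracket_jet P2d j i k m)
        * (if l = m then 1 else 0))) (at 0 within X)"
    by (intro DERIV_sum)
  moreover have "(\<Sum>m\<in>UNIV. ((1/2) * dbracket_jet P2d i j k m - (1/2) * dbracket_jet P2d j i k m)
      * (if l = m then 1 else 0)) = (1/2) * (dbracket_jet P2d i j k l - dbracket_jet P2d j i k l)"
    by (simp add: if_distrib algebra_simps cong: if_cong)
  ultimately show ?thesis unfolding Rm_jet_def by metis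
qed

end

lemma Gam_local:
  assumes "open V" "y \<in> V" "\<And>z. z \<in> V \<Longrightarrow> G z = G' z"
  shows "Gam G y m i j = Gam G' y m i j"
proof -
  have "pd a (\<lambda>z. G z $ b $ c) y = pd a (\<lambda>z. G' z $ b $ c) y" for a b c
    by (rule pd_local[OF assms(1,2)]) (simp add: assms(3))
  then show ?thesis unfolding Gam_def using assms(2,3) by simp
qed

lemma Rup_local:
  assumes "open V" "x \<in> V" "\<And>z. z \<in> V \<Longrightarrow> G z = G' z"
  shows "Rup G x i j k m = Rup G' x i j k m"
proof -
  have "pd a (\<lambda>y. Gam G y p q r) x = pd a (\<lambda>y. Gam G' y p q r) x" for a p q r
    by (rule pd_local[OF assms(1,2)]) (rule Gam_local[OF assms(1) _ assms(3)])
  moreover have "Gam G x p q r = Gam G' x p q r" for p q r by (rule Gam_local[OF assms])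
  ultimately show ?thesis unfolding Rup_def by simp
qed

lemma Ric_local:
  assumes "open V" "x \<in> V" "\<And>z. z \<in> V \<Longrightarrow> G z = G' z"
  shows "Ric G x j k = Ric G' x j k"
  unfolding Ric_def using Rup_local[OF assms] by simp

lemma Rm_local:
  assumes "open V" "x \<in> V" "\<And>z. z \<in> V \<Longrightarrow> G z = G' z"
  shows "Rm G i j k l x = Rm G' i j k l x"
  unfolding Rm_def using Rup_local[OF assms] assms(2,3) by simp


section \<open>The Ricci flow starting from the graph metric\<close>

lemma dRm0_dbracket: "dRm0 i j k l = (1/2) * (dbracket_jet ric_hess i j k l - dbracket_jet ric_hess j i k l)"
  unfolding dRm0_def dbracket_jet_def by simp

locale graph_ricci_flow =
  fixes T :: real and U :: "(real^('n::{finite,linorder})) set"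
    and g :: "real \<Rightarrow> real^('n::{finite,linorder}) \<Rightarrow> real^('n::{finite,linorder})^('n::{finite,linorder})"
  assumes time_pos: "T > 0" and domain_open: "open U" and U0: "0 \<in> U"
    and solution: "ricci_flow_solution T U g g0"
begin

sublocale strip T U
  using time_pos domain_open by unfold_locales

definition entry :: "'n::{finite,linorder} \<Rightarrow> 'n \<Rightarrow> real \<times> (real^('n::{finite,linorder})) \<Rightarrow> real" where
  "entry i j = (\<lambda>(t, x). g t x $ i $ j)"

lemma T0: "0 \<in> {0..<T}"
  using T_pos by simp

lemma smooth_entry: "smooth_on ST (entry i j)"
  using solution unfolding ricci_flow_solution_def entry_def by blast

lemma initial: "x \<in> U \<Longrightarrow> g 0 x = g0 x"
  using solution unfolding ricci_flow_solution_def by blast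

lemma flow: "t \<in> {0..<T} \<Longrightarrow> x \<in> U \<Longrightarrow>
    ((\<lambda>s. g s x $ i $ j) has_real_derivative (-2 * Ric (g t) x i j)) (at t within {0..<T})"
  using solution unfolding ricci_flow_solution_def by blast

lemma det_nonzero:
  assumes "t \<in> {0..<T}" "x \<in> U"
  shows "det (g t x) \<noteq> 0"
proof (rule pos_def_det_nonzero)
  fix v :: "real^('n::{finite,linorder})"
  assume "v \<noteq> 0"
  then show "inner v (g t x *v v) > 0"
    using solution assms unfolding ricci_flow_solution_def by blast
qed

lemma g_0_0: "g 0 0 = mat 1"
  using initial[OF U0] by (simp add: vec_eq_iff mat_def g0_entry)

lemma Rm_initial: "Rm (g 0) i j k l 0 = 0"
  using Rm_local[OF U_open U0 initial] Rm_g0_at_0 by simp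

definition jet1 :: "real \<Rightarrow> 'n::{finite,linorder} \<Rightarrow> 'n \<Rightarrow> 'n \<Rightarrow> real" where
  "jet1 t a k l = dx a (entry k l) (t, 0)"

definition jet2 :: "real \<Rightarrow> 'n::{finite,linorder} \<Rightarrow> 'n \<Rightarrow> 'n \<Rightarrow> 'n \<Rightarrow> real" where
  "jet2 t b a k l = dx b (dx a (entry k l)) (t, 0)"

lemma Rm_jet_at_0:
  assumes t: "t \<in> {0..<T}"
  shows "Rm (g t) i j k l 0 = Rm_jet (g t 0) (matrix_inv (g t 0)) (jet1 t) (jet2 t) i j k l"
proof -
  have "Rm (g t) i j k l 0 = Rm_jet (g t 0) (matrix_inv (g t 0)) (\<lambda>a k l. dx a (entry k l) (t, 0))
      (\<lambda>b a k l. dx b (dx a (entry k l)) (t, 0)) i j k l"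
  proof (rule Rm_at_0_jet[OF U_open U0])
    show "det (g t y) \<noteq> 0" if "y \<in> U" for y using det_nonzero t that by blast
    show "((\<lambda>s. g t (y + s *\<^sub>R axis a 1) $ k $ l) has_real_derivative dx a (entry k l) (t, y)) (at 0)"
      if "y \<in> U" for y a k l
      using dx_along_axis[OF smooth_entry[of k l] t that, of a] by (simp add: entry_def)
    show "((\<lambda>s. dx a (entry k l) (t, s *\<^sub>R axis b 1)) has_real_derivative dx b (dx a (entry k l)) (t, 0)) (at 0)"
      for b a k l
      using dx_along_axis[OF smooth_dx[OF smooth_entry[of k l], of a] t U0, of b] by simp
  qed
  then show ?thesis unfolding jet1_def jet2_def .
qed

lemma dx_entry_initial:
  assumes y: "y \<in> U"
  shows "dx a (entry k l) (0, y) = pd a (grad_prod k l) y"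
proof -
  have "dx a (entry k l) (0, y) = pd a (\<lambda>z. entry k l (0, z)) y"
    by (rule pd_eq_dx[OF smooth_entry T0 y, symmetric])
  also have "\<dots> = pd a (\<lambda>z. g0 z $ k $ l) y"
    by (rule pd_local[OF U_open y]) (simp add: entry_def initial)
  finally show ?thesis by (simp add: pd_g0)
qed

lemma jet1_initial: "jet1 0 a k l = 0"
  unfolding jet1_def dx_entry_initial[OF U0]
  using vanishes_toD[OF grad_prod_vanishes_to_4, of "[a]"] by simp

lemma jet2_initial: "jet2 0 b a k l = 0"
proof -
  have "jet2 0 b a k l = pd b (\<lambda>y. dx a (entry k l) (0, y)) 0"
    unfolding jet2_def by (rule pd_eq_dx[OF smooth_dx[OF smooth_entry] T0 U0, symmetric])
  also have "\<dots> = pd b (pd a (grad_prod k l)) 0"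
    by (rule pd_local[OF U_open U0]) (simp add: dx_entry_initial)
  also have "\<dots> = 0" using vanishes_toD[OF grad_prod_vanishes_to_4, of "[a, b]"] by simp
  finally show ?thesis .
qed

lemma dt_entry_initial: "z \<in> U \<Longrightarrow> dt (entry k l) (0, z) = -2 * Ric0 k l z"
proof -
  assume z: "z \<in> U"
  have "dt (entry k l) (0, z) = -2 * Ric (g 0) z k l"
    using derivative_unique_Ico[OF _ flow[OF T0 z] T0] dt_has_derivative[OF smooth_entry T0 z]
    by (simp add: entry_def)
  also have "Ric (g 0) z k l = Ric g0 z k l" by (rule Ric_local[OF U_open z initial])
  finally show ?thesis by (simp add: Ric_g0)
qed

text \<open>The time derivative of the second spatial jet at t = 0, using that time and space
  derivatives commute.\<close>

lemma jet2_time_derivative: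
  "((\<lambda>t. jet2 t b a k l) has_real_derivative ric_hess b a k l) (at 0 within {0..<T})"
proof -
  let ?F = "dx a (entry k l)"
  have smF: "smooth_on ST ?F" by (rule smooth_dx[OF smooth_entry])
  have dtF: "dt ?F (0, y) = -2 * pd a (Ric0 k l) y" if y: "y \<in> U" for y
  proof -
    have "dt ?F (0, y) = dx a (dt (entry k l)) (0, y)"
      by (rule derivative_unique_Ico[OF dt_has_derivative[OF smF T0 y] dt_dx_commute[OF smooth_entry y] T0])
    also have "\<dots> = pd a (\<lambda>z. dt (entry k l) (0, z)) y"
      by (rule pd_eq_dx[OF smooth_dt[OF smooth_entry] T0 y, symmetric])
    also have "\<dots> = pd a (\<lambda>z. -2 * Ric0 k l z) y"
      by (rule pd_local[OF U_open y]) (simp add: dt_entry_initial)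
    also have "\<dots> = -2 * pd a (Ric0 k l) y"
      by (rule pd_cmult) auto
    finally show ?thesis .
  qed
  have "dx b (dt ?F) (0, 0) = pd b (\<lambda>y. dt ?F (0, y)) 0"
    by (rule pd_eq_dx[OF smooth_dt[OF smF] T0 U0, symmetric])
  also have "\<dots> = pd b (\<lambda>y. -2 * pd a (Ric0 k l) y) 0"
    by (rule pd_local[OF U_open U0]) (simp add: dtF)
  also have "\<dots> = ric_hess b a k l"
    unfolding ric_hess_def iter_pd.simps by (rule pd_cmult) auto
  finally show ?thesis
    using dt_dx_commute[OF smF U0, of b] unfolding jet2_def by simp
qed

lemma Rm_time_derivative:
  "((\<lambda>t. Rm (g t) i j k l 0) has_real_derivative dRm0 i j k l) (at 0 within {0..<T})"
proof -
  have "\<forall>a b. \<exists>D. ((\<lambda>t. matrix_inv (g t 0) $ a $ b) has_real_derivative D) (at 0 within {0..<T})"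
    using dt_has_derivative[OF smooth_entry T0 U0] det_nonzero[OF _ U0]
    by (intro allI matrix_inv_differentiable[OF T0]) (auto simp: entry_def real_differentiable_def)
  then obtain IVd
    where IVd: "\<And>a b. ((\<lambda>t. matrix_inv (g t 0) $ a $ b) has_real_derivative IVd a b) (at 0 within {0..<T})"
    by metis
  interpret flat_jet_path "\<lambda>t. g t 0" "\<lambda>t. matrix_inv (g t 0)" jet1 jet2 "{0..<T}"
    "\<lambda>a b. dt (entry a b) (0, 0)" IVd "\<lambda>a k l. dt (dx a (entry k l)) (0, 0)" ric_hess
  proof
    show "((\<lambda>t. g t 0 $ a $ b) has_real_derivative dt (entry a b) (0, 0)) (at 0 within {0..<T})" for a b
      using dt_has_derivative[OF smooth_entry T0 U0] by (simp add: entry_def)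
    show "((\<lambda>t. jet1 t a k l) has_real_derivative dt (dx a (entry k l)) (0, 0)) (at 0 within {0..<T})"
      for a k l
      unfolding jet1_def by (rule dt_has_derivative[OF smooth_dx[OF smooth_entry] T0 U0])
    show "matrix_inv (g 0 0) = mat 1" unfolding g_0_0 by (rule matrix_inv_unique) simp_all
  qed (fact IVd jet2_time_derivative g_0_0 jet1_initial jet2_initial)+
  have "((\<lambda>t. Rm_jet (g t 0) (matrix_inv (g t 0)) (jet1 t) (jet2 t) i j k l)
      has_real_derivative dRm0 i j k l) (at 0 within {0..<T})"
    unfolding dRm0_dbracket by (rule Rm_jet_deriv)
  then show ?thesis
    by (rule has_field_derivative_transform_within[OF _ zero_less_one T0]) (simp add: Rm_jet_at_0)
qed

end

lemma dRm0_zero: "{i, j} \<noteq> {k, l} \<Longrightarrow> dRm0 i j k l = 0"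
  by (simp add: dRm0_curv_rate curv_rate_zero)

lemma dRm0_sectional:
  fixes i j :: "'n::{finite,linorder}"
  assumes "pos i < pos j"
  shows "dRm0 i j i j = -8 * (real CARD('n) - real (pos j) + 2)"
    and "-8 * (real CARD('n) - real (pos j) + 2) < 0"
proof -
  have "i < j" using assms by (simp add: pos_less_iff)
  then show "dRm0 i j i j = -8 * (real CARD('n) - real (pos j) + 2)"
    by (simp add: dRm0_curv_rate curv_rate_sectional algebra_simps)
  show "-8 * (real CARD('n) - real (pos j) + 2) < 0"
    using pos_le_card[of j] by simp
qed

lemma two_indices:
  assumes "CARD('n) \<ge> 2"
  obtains i j :: "'n::{finite,linorder}" where "pos i < pos j"
proof -
  obtain i j :: 'n where "i \<noteq> j"
    using assms card_le_Suc0_iff_eq[of "UNIV :: 'n set"] by force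
  then have "i < j \<or> j < i" by auto
  then show ?thesis using that by (auto simp: pos_less_iff)
qed

theorem mainTheorem2:
  fixes T :: real and U :: "(real^('n::{finite,linorder})) set"
    and g :: "real \<Rightarrow> real^('n::{finite,linorder}) \<Rightarrow> real^('n::{finite,linorder})^('n::{finite,linorder})"
  assumes "card (UNIV :: 'n set) \<ge> 2"
    and "T > 0" and "open U" and "0 \<in> U"
    and "ricci_flow_solution T U g (induced_metric fgraph)"
  shows "g 0 0 = mat 1
    \<and> (\<forall>i j k l. Rm (g 0) i j k l 0 = 0)
    \<and> (\<forall>i j k l. {i, j} \<noteq> {k, l} \<longrightarrow>
          ((\<lambda>t. Rm (g t) i j k l 0) has_real_derivative 0) (at 0 within {0..<T}))
    \<and> (\<forall>i j. pos i < pos j \<longrightarrow>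
          ((\<lambda>t. Rm (g t) i j i j 0) has_real_derivative
              (-8 * (real (card (UNIV :: 'n set)) - real (pos j) + 2))) (at 0 within {0..<T})
          \<and> -8 * (real (card (UNIV :: 'n set)) - real (pos j) + 2) < 0)
    \<and> (\<exists>i j k l D. ((\<lambda>t. Rm (g t) i j k l 0) has_real_derivative D) (at 0 within {0..<T})
          \<and> D \<noteq> 0)"
proof -
  interpret graph_ricci_flow T U g
    using assms(2-5) by unfold_locales
  have off_diagonal: "((\<lambda>t. Rm (g t) i j k l 0) has_real_derivative 0) (at 0 within {0..<T})"
    if "{i, j} \<noteq> {k, l}" for i j k l
    using Rm_time_derivative[of i j k l] dRm0_zero[OF that] by simp
  have sectional: "((\<lambda>t. Rm (g t) i j i j 0) has_real_derivative
      (-8 * (real CARD('n) - real (pos j) + 2))) (at 0 within {0..<T})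
      \<and> -8 * (real CARD('n) - real (pos j) + 2) < 0" if "pos i < pos j" for i j
    using Rm_time_derivative[of i j i j] dRm0_sectional[OF that] by simp
  obtain i j :: 'n where "pos i < pos j"
    using two_indices assms(1) by blast
  then have "\<exists>i j k l D. ((\<lambda>t. Rm (g t) i j k l 0) has_real_derivative D) (at 0 within {0..<T}) \<and> D \<noteq> 0"
    using sectional by fastforce
  then show ?thesis
    using g_0_0 Rm_initial off_diagonal sectional by blast
qed

end
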